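(* Let $\mathbb{S}=(\mathsf{S},\mu,\eta)$ be a Cartesian $k$-differential monad on a Cartesian $k$-differential category $\mathbb{X}$ with differential combinator $\mathsf{D}$. Then: (i) The Kleisli category $\mathsf{KL}(\mathbb{S})$, with the Cartesian left $k$-linear structure given by: terminal object and products of objects as in $\mathbb{X}$, projections $\llbracket\pi_j\rrbracket=\eta_{A_j}\circ\pi_j$, pairing $\llbracket\langle f_1,\dots,f_n\rangle\rrbracket=\omega^{-1}_{B_1,\dots,B_n}\circ\langle\llbracket f_1\rrbracket,\dots,\llbracket f_n\rrbracket\rangle$, and $k$-module structure on $\mathsf{KL}(\mathbb{S})(A,B)=\mathbb{X}(A,\mathsf{S}(B))$ inherited from $\mathbb{X}$, is a Cartesian $k$-differential category with differential combinator $\mathsf{D}_\mathbb{S}$ defined on a Kleisli map $\llbracket f\rrbracket:A\to\mathsf{S}(B)$ by $\llbracket\mathsf{D}_\mathbb{S}[f]\rrbracket:=\mathsf{D}[\llbracket f\rrbracket]:A\times A\to\mathsf{S}(B)$. (ii) A map $f$ of $\mathsf{KL}(\mathbb{S})$ is $\mathsf{D}_\mathbb{S}$-linear if and only if $\llbracket f\rrbracket$ is $\mathsf{D}$-linear in $\mathbb{X}$. (iii) $\mathsf{L}_\mathbb{S}:\mathbb{X}\to\mathsf{KL}(\mathbb{S})$ is a strict Cartesian $k$-differential functor and $\mathsf{R}_\mathbb{S}:\mathsf{KL}(\mathbb{S})\to\mathbb{X}$ is a strong Cartesian $k$-differential functor.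
   Context: Fix a commutative semiring $k$. A left $k$-linear category is a category $\mathbb{X}$ in which each hom-set $\mathbb{X}(A,B)$ is a $k$-module (scalar multiplication $r\cdot f$, addition $+$, zero $0$) such that precomposition is $k$-linear: $(r\cdot f+s\cdot g)\circ x=r\cdot(f\circ x)+s\cdot(g\circ x)$. A map $f$ is $k$-linear if $f\circ(r\cdot x+s\cdot y)=r\cdot(f\circ x)+s\cdot(f\circ y)$ for all suitable $x,y$ and $r,s\in k$. A Cartesian left $k$-linear category is a left $k$-linear category with finite products (terminal object $\ast$, projections $\pi_j:A_1\times\cdots\times A_n\to A_j$, pairing $\langle-,\dots,-\rangle$) in which all projections are $k$-linear. A Cartesian $k$-differential category is a Cartesian left $k$-linear category equipped with a differential combinator $\mathsf{D}$ assigning to each $f:A\to B$ a map $\mathsf{D}[f]:A\times A\to B$ such that: [CD.1] $\mathsf{D}[r\cdot f+s\cdot g]=r\cdot\mathsf{D}[f]+s\cdot\mathsf{D}[g]$; [CD.2] $\mathsf{D}[f]\circ\langle\pi_1,r\cdot\pi_2+s\cdot\pi_3\rangle=r\cdot(\mathsf{D}[f]\circ\langle\pi_1,\pi_2\rangle)+s\cdot(\mathsf{D}[f]\circ\langle\pi_1,\pi_3\rangle)$ (as maps $A\times A\times A\to B$); [CD.3] $\mathsf{D}[1_A]=\pi_2$ and, for $\pi_j:A_1\times\cdots\times A_n\to A_j$, $\mathsf{D}[\pi_j]=\pi_{n+j}$; [CD.4] $\mathsf{D}[\langle f_1,\dots,f_n\rangle]=\langle\mathsf{D}[f_1],\dots,\mathsf{D}[f_n]\rangle$;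 [CD.5] $\mathsf{D}[g\circ f]=\mathsf{D}[g]\circ\langle f\circ\pi_1,\mathsf{D}[f]\rangle$; [CD.6] $\mathsf{D}[\mathsf{D}[f]]\circ\langle\pi_1,0,0,\pi_2\rangle=\mathsf{D}[f]$; [CD.7] $\mathsf{D}[\mathsf{D}[f]]\circ\langle\pi_1,\pi_2,\pi_3,\pi_4\rangle=\mathsf{D}[\mathsf{D}[f]]\circ\langle\pi_1,\pi_3,\pi_2,\pi_4\rangle$ (identifying $(A\times A)\times(A\times A)$ with $A\times A\times A\times A$). A map $f$ is $\mathsf{D}$-linear if $\mathsf{D}[f]=f\circ\pi_2$. For Cartesian left $k$-linear categories $\mathbb{X},\mathbb{Y}$, a strong Cartesian $k$-linear functor is a functor $\mathsf{F}:\mathbb{X}\to\mathbb{Y}$ such that $\mathsf{F}(\ast)\to\ast$ is an isomorphism, the canonical maps $\omega_{A_1,\dots,A_n}=\langle\mathsf{F}(\pi_1),\dots,\mathsf{F}(\pi_n)\rangle:\mathsf{F}(A_1\times\cdots\times A_n)\to\mathsf{F}(A_1)\times\cdots\times\mathsf{F}(A_n)$ are isomorphisms, and $\mathsf{F}(r\cdot f+s\cdot g)=r\cdot\mathsf{F}(f)+s\cdot\mathsf{F}(g)$. It is strict if moreover $\omega$ is the identity. For Cartesian $k$-differential categories, a strong Cartesian $k$-differential functor is a strong Cartesian $k$-linear functor with $\mathsf{D}[\mathsf{F}(f)]=\mathsf{F}(\mathsf{D}[f])\circ\omega^{-1}_{A,A}$ for all $f:A\to B$; a strict Cartesian $k$-differential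 functor is a strict Cartesian $k$-linear functor with $\mathsf{D}[\mathsf{F}(f)]=\mathsf{F}(\mathsf{D}[f])$. A Cartesian $k$-differential monad on a Cartesian $k$-differential category $\mathbb{X}$ is a monad $\mathbb{S}=(\mathsf{S},\mu,\eta)$ on $\mathbb{X}$ such that $\mathsf{S}$ is a strong Cartesian $k$-differential functor and every $\eta_A$ and $\mu_A$ is $\mathsf{D}$-linear. Kleisli category notation: $\mathsf{KL}(\mathbb{S})$ has the objects of $\mathbb{X}$ and a map $f:A\to B$ in it is a map $\llbracket f\rrbracket:A\to\mathsf{S}(B)$ in $\mathbb{X}$; identities are $\llbracket 1_A\rrbracket=\eta_A$ and composition is $\llbracket g\circ f\rrbracket=\mu_C\circ\mathsf{S}(\llbracket g\rrbracket)\circ\llbracket f\rrbracket$. The functor $\mathsf{L}_\mathbb{S}:\mathbb{X}\to\mathsf{KL}(\mathbb{S})$ is identity on objects with $\llbracket\mathsf{L}_\mathbb{S}(f)\rrbracket=\eta_B\circ f$; the functor $\mathsf{R}_\mathbb{S}:\mathsf{KL}(\mathbb{S})\to\mathbb{X}$ is $\mathsf{R}_\mathbb{S}(A)=\mathsf{S}(A)$, $\mathsf{R}_\mathbb{S}(f)=\mu_B\circ\mathsf{S}(\llbracket f\rrbracket)$. *)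

theory Defs
  imports Main
begin

text \<open>A category is given by a set of objects, hom-sets, identities and a composition
  that is annotated with the objects involved (Cmp A B C g f = g o f for f : A -> B,
  g : B -> C).  The k-module structure on hom-sets is Smul, Add, Zro (Zro A B is the zero
  of the hom-set A -> B).  Finite products are indexed by lists of objects: Prd As is the
  product of the list As (Prd [] is the terminal object), Proj As j is the j-th projection
  (0-indexed) and Tup C As fs is the pairing of fs, a list of maps C -> As!j.\<close>

record ('o, 'm, 'k) cdstr =
  Ob   :: "'o set"
  Hom  :: "'o \<Rightarrow> 'o \<Rightarrow> 'm set"
  Idm  :: "'o \<Rightarrow> 'm"
  Cmp  :: "'o \<Rightarrow> 'o \<Rightarrow> 'o \<Rightarrow> 'm \<Rightarrow> 'm \<Rightarrow> 'm"
  Smul :: "'k \<Rightarrow> 'm \<Rightarrow> 'm"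
  Add  :: "'m \<Rightarrow> 'm \<Rightarrow> 'm"
  Zro  :: "'o \<Rightarrow> 'o \<Rightarrow> 'm"
  Prd  :: "'o list \<Rightarrow> 'o"
  Proj :: "'o list \<Rightarrow> nat \<Rightarrow> 'm"
  Tup  :: "'o \<Rightarrow> 'o list \<Rightarrow> 'm list \<Rightarrow> 'm"
  Dif  :: "'o \<Rightarrow> 'o \<Rightarrow> 'm \<Rightarrow> 'm"

definition is_category :: "('o, 'm, 'k) cdstr \<Rightarrow> bool" where
  "is_category X \<longleftrightarrow>
     (\<forall>A\<in>Ob X. Idm X A \<in> Hom X A A) \<and>
     (\<forall>A\<in>Ob X. \<forall>B\<in>Ob X. \<forall>C\<in>Ob X. \<forall>f g.
        f \<in> Hom X A B \<longrightarrow> g \<in> Hom X B C \<longrightarrow> Cmp X A B C g f \<in> Hom X A C) \<and>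
     (\<forall>A\<in>Ob X. \<forall>B\<in>Ob X. \<forall>f. f \<in> Hom X A B \<longrightarrow>
        Cmp X A A B f (Idm X A) = f \<and> Cmp X A B B (Idm X B) f = f) \<and>
     (\<forall>A\<in>Ob X. \<forall>B\<in>Ob X. \<forall>C\<in>Ob X. \<forall>E\<in>Ob X. \<forall>f g h.
        f \<in> Hom X A B \<longrightarrow> g \<in> Hom X B C \<longrightarrow> h \<in> Hom X C E \<longrightarrow>
        Cmp X A C E h (Cmp X A B C g f) = Cmp X A B E (Cmp X B C E h g) f)"

definition is_left_klinear :: "('o, 'm, 'k::comm_semiring_1) cdstr \<Rightarrow> bool" where
  "is_left_klinear X \<longleftrightarrow> is_category X \<and>
     (\<forall>A\<in>Ob X. \<forall>B\<in>Ob X.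
        Zro X A B \<in> Hom X A B \<and>
        (\<forall>f\<in>Hom X A B. \<forall>g\<in>Hom X A B. Add X f g \<in> Hom X A B) \<and>
        (\<forall>r. \<forall>f\<in>Hom X A B. Smul X r f \<in> Hom X A B) \<and>
        (\<forall>f\<in>Hom X A B. \<forall>g\<in>Hom X A B. \<forall>h\<in>Hom X A B.
            Add X (Add X f g) h = Add X f (Add X g h)) \<and>
        (\<forall>f\<in>Hom X A B. \<forall>g\<in>Hom X A B. Add X f g = Add X g f) \<and>
        (\<forall>f\<in>Hom X A B. Add X f (Zro X A B) = f) \<and>
        (\<forall>r. \<forall>f\<in>Hom X A B. \<forall>g\<in>Hom X A B.
            Smul X r (Add X f g) = Add X (Smul X r f) (Smul X r g)) \<and>
        (\<forall>r s. \<forall>f\<in>Hom X A B. Smul X (r + s) f = Add X (Smul X r f) (Smul X s f)) \<and>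
        (\<forall>r s. \<forall>f\<in>Hom X A B. Smul X (r * s) f = Smul X r (Smul X s f)) \<and>
        (\<forall>f\<in>Hom X A B. Smul X 1 f = f) \<and>
        (\<forall>f\<in>Hom X A B. Smul X 0 f = Zro X A B) \<and>
        (\<forall>r. Smul X r (Zro X A B) = Zro X A B)) \<and>
     (\<forall>A\<in>Ob X. \<forall>B\<in>Ob X. \<forall>C\<in>Ob X. \<forall>f g x r s.
        f \<in> Hom X B C \<longrightarrow> g \<in> Hom X B C \<longrightarrow> x \<in> Hom X A B \<longrightarrow>
        Cmp X A B C (Add X (Smul X r f) (Smul X s g)) x =
        Add X (Smul X r (Cmp X A B C f x)) (Smul X s (Cmp X A B C g x)))"

definition is_klinear_map :: "('o, 'm, 'k::comm_semiring_1) cdstr \<Rightarrow> 'o \<Rightarrow> 'o \<Rightarrow> 'm \<Rightarrow> bool" where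
  "is_klinear_map X A B f \<longleftrightarrow>
     (\<forall>C\<in>Ob X. \<forall>x y r s. x \<in> Hom X C A \<longrightarrow> y \<in> Hom X C A \<longrightarrow>
        Cmp X C A B f (Add X (Smul X r x) (Smul X s y)) =
        Add X (Smul X r (Cmp X C A B f x)) (Smul X s (Cmp X C A B f y)))"

definition has_finite_products :: "('o, 'm, 'k) cdstr \<Rightarrow> bool" where
  "has_finite_products X \<longleftrightarrow>
     (\<forall>As. set As \<subseteq> Ob X \<longrightarrow>
        Prd X As \<in> Ob X \<and>
        (\<forall>j < length As. Proj X As j \<in> Hom X (Prd X As) (As ! j)) \<and>
        (\<forall>C\<in>Ob X. \<forall>fs. length fs = length As \<longrightarrow>
            (\<forall>j < length As. fs ! j \<in> Hom X C (As ! j)) \<longrightarrow>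
            Tup X C As fs \<in> Hom X C (Prd X As) \<and>
            (\<forall>j < length As. Cmp X C (Prd X As) (As ! j) (Proj X As j) (Tup X C As fs) = fs ! j)) \<and>
        (\<forall>C\<in>Ob X. \<forall>g. g \<in> Hom X C (Prd X As) \<longrightarrow>
            Tup X C As (map (\<lambda>j. Cmp X C (Prd X As) (As ! j) (Proj X As j) g) [0..<length As]) = g))"

definition is_cartesian_left_klinear :: "('o, 'm, 'k::comm_semiring_1) cdstr \<Rightarrow> bool" where
  "is_cartesian_left_klinear X \<longleftrightarrow> is_left_klinear X \<and> has_finite_products X \<and>
     (\<forall>As. set As \<subseteq> Ob X \<longrightarrow>
        (\<forall>j < length As. is_klinear_map X (Prd X As) (As ! j) (Proj X As j)))"

definition is_cartesian_kdiff :: "('o, 'm, 'k::comm_semiring_1) cdstr \<Rightarrow> bool" where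
  "is_cartesian_kdiff X \<longleftrightarrow> is_cartesian_left_klinear X \<and>
     (\<forall>A\<in>Ob X. \<forall>B\<in>Ob X. \<forall>f. f \<in> Hom X A B \<longrightarrow>
        Dif X A B f \<in> Hom X (Prd X [A, A]) B) \<and>
     \<comment> \<open>CD.1\<close>
     (\<forall>A\<in>Ob X. \<forall>B\<in>Ob X. \<forall>f g r s. f \<in> Hom X A B \<longrightarrow> g \<in> Hom X A B \<longrightarrow>
        Dif X A B (Add X (Smul X r f) (Smul X s g)) =
        Add X (Smul X r (Dif X A B f)) (Smul X s (Dif X A B g))) \<and>
     \<comment> \<open>CD.2\<close>
     (\<forall>A\<in>Ob X. \<forall>B\<in>Ob X. \<forall>f r s. f \<in> Hom X A B \<longrightarrow>
        (let P3 = Prd X [A, A, A]; P2 = Prd X [A, A]; p = Proj X [A, A, A] in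
         Cmp X P3 P2 B (Dif X A B f)
           (Tup X P3 [A, A] [p 0, Add X (Smul X r (p 1)) (Smul X s (p 2))]) =
         Add X (Smul X r (Cmp X P3 P2 B (Dif X A B f) (Tup X P3 [A, A] [p 0, p 1])))
               (Smul X s (Cmp X P3 P2 B (Dif X A B f) (Tup X P3 [A, A] [p 0, p 2]))))) \<and>
     \<comment> \<open>CD.3\<close>
     (\<forall>A\<in>Ob X. Dif X A A (Idm X A) = Proj X [A, A] 1) \<and>
     (\<forall>As. set As \<subseteq> Ob X \<longrightarrow> (\<forall>j < length As.
        (let P = Prd X As in
         Dif X P (As ! j) (Proj X As j) =
         Cmp X (Prd X [P, P]) P (As ! j) (Proj X As j) (Proj X [P, P] 1)))) \<and>
     \<comment> \<open>CD.4\<close>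
     (\<forall>A\<in>Ob X. \<forall>Bs fs. set Bs \<subseteq> Ob X \<longrightarrow> length fs = length Bs \<longrightarrow>
        (\<forall>j < length Bs. fs ! j \<in> Hom X A (Bs ! j)) \<longrightarrow>
        Dif X A (Prd X Bs) (Tup X A Bs fs) =
        Tup X (Prd X [A, A]) Bs (map (\<lambda>j. Dif X A (Bs ! j) (fs ! j)) [0..<length Bs])) \<and>
     \<comment> \<open>CD.5\<close>
     (\<forall>A\<in>Ob X. \<forall>B\<in>Ob X. \<forall>C\<in>Ob X. \<forall>f g. f \<in> Hom X A B \<longrightarrow> g \<in> Hom X B C \<longrightarrow>
        Dif X A C (Cmp X A B C g f) =
        Cmp X (Prd X [A, A]) (Prd X [B, B]) C (Dif X B C g)
          (Tup X (Prd X [A, A]) [B, B]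
             [Cmp X (Prd X [A, A]) A B f (Proj X [A, A] 0), Dif X A B f])) \<and>
     \<comment> \<open>CD.6\<close>
     (\<forall>A\<in>Ob X. \<forall>B\<in>Ob X. \<forall>f. f \<in> Hom X A B \<longrightarrow>
        (let P2 = Prd X [A, A] in
         Cmp X P2 (Prd X [P2, P2]) B (Dif X P2 B (Dif X A B f))
           (Tup X P2 [P2, P2]
              [Tup X P2 [A, A] [Proj X [A, A] 0, Zro X P2 A],
               Tup X P2 [A, A] [Zro X P2 A, Proj X [A, A] 1]]) =
         Dif X A B f)) \<and>
     \<comment> \<open>CD.7\<close>
     (\<forall>A\<in>Ob X. \<forall>B\<in>Ob X. \<forall>f. f \<in> Hom X A B \<longrightarrow>
        (let P2 = Prd X [A, A]; P4 = Prd X [A, A, A, A]; q = Proj X [A, A, A, A];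
             DDf = Dif X P2 B (Dif X A B f) in
         Cmp X P4 (Prd X [P2, P2]) B DDf
           (Tup X P4 [P2, P2] [Tup X P4 [A, A] [q 0, q 1], Tup X P4 [A, A] [q 2, q 3]]) =
         Cmp X P4 (Prd X [P2, P2]) B DDf
           (Tup X P4 [P2, P2] [Tup X P4 [A, A] [q 0, q 2], Tup X P4 [A, A] [q 1, q 3]])))"

definition is_D_linear :: "('o, 'm, 'k) cdstr \<Rightarrow> 'o \<Rightarrow> 'o \<Rightarrow> 'm \<Rightarrow> bool" where
  "is_D_linear X A B f \<longleftrightarrow> Dif X A B f = Cmp X (Prd X [A, A]) A B f (Proj X [A, A] 1)"

definition is_functor :: "('o, 'm, 'k) cdstr \<Rightarrow> ('p, 'n, 'k) cdstr \<Rightarrow>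
    ('o \<Rightarrow> 'p) \<Rightarrow> ('o \<Rightarrow> 'o \<Rightarrow> 'm \<Rightarrow> 'n) \<Rightarrow> bool" where
  "is_functor X Y Fo Fm \<longleftrightarrow>
     (\<forall>A\<in>Ob X. Fo A \<in> Ob Y) \<and>
     (\<forall>A\<in>Ob X. \<forall>B\<in>Ob X. \<forall>f. f \<in> Hom X A B \<longrightarrow> Fm A B f \<in> Hom Y (Fo A) (Fo B)) \<and>
     (\<forall>A\<in>Ob X. Fm A A (Idm X A) = Idm Y (Fo A)) \<and>
     (\<forall>A\<in>Ob X. \<forall>B\<in>Ob X. \<forall>C\<in>Ob X. \<forall>f g. f \<in> Hom X A B \<longrightarrow> g \<in> Hom X B C \<longrightarrow>
        Fm A C (Cmp X A B C g f) = Cmp Y (Fo A) (Fo B) (Fo C) (Fm B C g) (Fm A B f))"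

definition is_iso :: "('o, 'm, 'k) cdstr \<Rightarrow> 'o \<Rightarrow> 'o \<Rightarrow> 'm \<Rightarrow> bool" where
  "is_iso X A B f \<longleftrightarrow> f \<in> Hom X A B \<and>
     (\<exists>g \<in> Hom X B A. Cmp X A B A g f = Idm X A \<and> Cmp X B A B f g = Idm X B)"

definition iso_inv :: "('o, 'm, 'k) cdstr \<Rightarrow> 'o \<Rightarrow> 'o \<Rightarrow> 'm \<Rightarrow> 'm" where
  "iso_inv X A B f = (SOME g. g \<in> Hom X B A \<and>
       Cmp X A B A g f = Idm X A \<and> Cmp X B A B f g = Idm X B)"

definition omega :: "('o, 'm, 'k) cdstr \<Rightarrow> ('p, 'n, 'k) cdstr \<Rightarrow>
    ('o \<Rightarrow> 'p) \<Rightarrow> ('o \<Rightarrow> 'o \<Rightarrow> 'm \<Rightarrow> 'n) \<Rightarrow> 'o list \<Rightarrow> 'n" where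
  "omega X Y Fo Fm As =
     Tup Y (Fo (Prd X As)) (map Fo As)
       (map (\<lambda>j. Fm (Prd X As) (As ! j) (Proj X As j)) [0..<length As])"

definition omega_inv :: "('o, 'm, 'k) cdstr \<Rightarrow> ('p, 'n, 'k) cdstr \<Rightarrow>
    ('o \<Rightarrow> 'p) \<Rightarrow> ('o \<Rightarrow> 'o \<Rightarrow> 'm \<Rightarrow> 'n) \<Rightarrow> 'o list \<Rightarrow> 'n" where
  "omega_inv X Y Fo Fm As =
     iso_inv Y (Fo (Prd X As)) (Prd Y (map Fo As)) (omega X Y Fo Fm As)"

text \<open>Strong Cartesian k-linear functor.  The condition that F(terminal) -> terminal is an
  isomorphism is the case As = [] (the terminal object is the empty product).\<close>

definition is_strong_cart_klinear_functor :: "('o, 'm, 'k::comm_semiring_1) cdstr \<Rightarrow>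
    ('p, 'n, 'k) cdstr \<Rightarrow> ('o \<Rightarrow> 'p) \<Rightarrow> ('o \<Rightarrow> 'o \<Rightarrow> 'm \<Rightarrow> 'n) \<Rightarrow> bool" where
  "is_strong_cart_klinear_functor X Y Fo Fm \<longleftrightarrow> is_functor X Y Fo Fm \<and>
     (\<forall>As. set As \<subseteq> Ob X \<longrightarrow>
        is_iso Y (Fo (Prd X As)) (Prd Y (map Fo As)) (omega X Y Fo Fm As)) \<and>
     (\<forall>A\<in>Ob X. \<forall>B\<in>Ob X. \<forall>f g r s. f \<in> Hom X A B \<longrightarrow> g \<in> Hom X A B \<longrightarrow>
        Fm A B (Add X (Smul X r f) (Smul X s g)) =
        Add Y (Smul Y r (Fm A B f)) (Smul Y s (Fm A B g)))"

definition is_strict_cart_klinear_functor :: "('o, 'm, 'k::comm_semiring_1) cdstr \<Rightarrow>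
    ('p, 'n, 'k) cdstr \<Rightarrow> ('o \<Rightarrow> 'p) \<Rightarrow> ('o \<Rightarrow> 'o \<Rightarrow> 'm \<Rightarrow> 'n) \<Rightarrow> bool" where
  "is_strict_cart_klinear_functor X Y Fo Fm \<longleftrightarrow> is_strong_cart_klinear_functor X Y Fo Fm \<and>
     (\<forall>As. set As \<subseteq> Ob X \<longrightarrow>
        Fo (Prd X As) = Prd Y (map Fo As) \<and>
        omega X Y Fo Fm As = Idm Y (Fo (Prd X As)))"

definition is_strong_cart_kdiff_functor :: "('o, 'm, 'k::comm_semiring_1) cdstr \<Rightarrow>
    ('p, 'n, 'k) cdstr \<Rightarrow> ('o \<Rightarrow> 'p) \<Rightarrow> ('o \<Rightarrow> 'o \<Rightarrow> 'm \<Rightarrow> 'n) \<Rightarrow> bool" where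
  "is_strong_cart_kdiff_functor X Y Fo Fm \<longleftrightarrow> is_strong_cart_klinear_functor X Y Fo Fm \<and>
     (\<forall>A\<in>Ob X. \<forall>B\<in>Ob X. \<forall>f. f \<in> Hom X A B \<longrightarrow>
        Dif Y (Fo A) (Fo B) (Fm A B f) =
        Cmp Y (Prd Y [Fo A, Fo A]) (Fo (Prd X [A, A])) (Fo B)
          (Fm (Prd X [A, A]) B (Dif X A B f)) (omega_inv X Y Fo Fm [A, A]))"

definition is_strict_cart_kdiff_functor :: "('o, 'm, 'k::comm_semiring_1) cdstr \<Rightarrow>
    ('p, 'n, 'k) cdstr \<Rightarrow> ('o \<Rightarrow> 'p) \<Rightarrow> ('o \<Rightarrow> 'o \<Rightarrow> 'm \<Rightarrow> 'n) \<Rightarrow> bool" where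
  "is_strict_cart_kdiff_functor X Y Fo Fm \<longleftrightarrow> is_strict_cart_klinear_functor X Y Fo Fm \<and>
     (\<forall>A\<in>Ob X. \<forall>B\<in>Ob X. \<forall>f. f \<in> Hom X A B \<longrightarrow>
        Dif Y (Fo A) (Fo B) (Fm A B f) = Fm (Prd X [A, A]) B (Dif X A B f))"

definition is_monad :: "('o, 'm, 'k) cdstr \<Rightarrow> ('o \<Rightarrow> 'o) \<Rightarrow> ('o \<Rightarrow> 'o \<Rightarrow> 'm \<Rightarrow> 'm) \<Rightarrow>
    ('o \<Rightarrow> 'm) \<Rightarrow> ('o \<Rightarrow> 'm) \<Rightarrow> bool" where
  "is_monad X So Sm mu eta \<longleftrightarrow> is_functor X X So Sm \<and>
     (\<forall>A\<in>Ob X. eta A \<in> Hom X A (So A) \<and> mu A \<in> Hom X (So (So A)) (So A)) \<and>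
     (\<forall>A\<in>Ob X. \<forall>B\<in>Ob X. \<forall>f. f \<in> Hom X A B \<longrightarrow>
        Cmp X A (So A) (So B) (Sm A B f) (eta A) = Cmp X A B (So B) (eta B) f \<and>
        Cmp X (So (So A)) (So (So B)) (So B) (mu B) (Sm (So A) (So B) (Sm A B f)) =
        Cmp X (So (So A)) (So A) (So B) (Sm A B f) (mu A)) \<and>
     (\<forall>A\<in>Ob X.
        Cmp X (So A) (So (So A)) (So A) (mu A) (eta (So A)) = Idm X (So A) \<and>
        Cmp X (So A) (So (So A)) (So A) (mu A) (Sm A (So A) (eta A)) = Idm X (So A) \<and>
        Cmp X (So (So (So A))) (So (So A)) (So A) (mu A) (mu (So A)) =
        Cmp X (So (So (So A))) (So (So A)) (So A) (mu A) (Sm (So (So A)) (So A) (mu A)))"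

definition is_cart_kdiff_monad :: "('o, 'm, 'k::comm_semiring_1) cdstr \<Rightarrow> ('o \<Rightarrow> 'o) \<Rightarrow>
    ('o \<Rightarrow> 'o \<Rightarrow> 'm \<Rightarrow> 'm) \<Rightarrow> ('o \<Rightarrow> 'm) \<Rightarrow> ('o \<Rightarrow> 'm) \<Rightarrow> bool" where
  "is_cart_kdiff_monad X So Sm mu eta \<longleftrightarrow> is_monad X So Sm mu eta \<and>
     is_strong_cart_kdiff_functor X X So Sm \<and>
     (\<forall>A\<in>Ob X. is_D_linear X A (So A) (eta A) \<and> is_D_linear X (So (So A)) (So A) (mu A))"

definition kleisli :: "('o, 'm, 'k) cdstr \<Rightarrow> ('o \<Rightarrow> 'o) \<Rightarrow> ('o \<Rightarrow> 'o \<Rightarrow> 'm \<Rightarrow> 'm) \<Rightarrow>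
    ('o \<Rightarrow> 'm) \<Rightarrow> ('o \<Rightarrow> 'm) \<Rightarrow> ('o, 'm, 'k) cdstr" where
  "kleisli X So Sm mu eta =
     \<lparr> Ob = Ob X,
       Hom = (\<lambda>A B. Hom X A (So B)),
       Idm = eta,
       Cmp = (\<lambda>A B C g f. Cmp X A (So B) (So C)
                (Cmp X (So B) (So (So C)) (So C) (mu C) (Sm B (So C) g)) f),
       Smul = Smul X,
       Add = Add X,
       Zro = (\<lambda>A B. Zro X A (So B)),
       Prd = Prd X,
       Proj = (\<lambda>As j. Cmp X (Prd X As) (As ! j) (So (As ! j)) (eta (As ! j)) (Proj X As j)),
       Tup = (\<lambda>C Bs fs. Cmp X C (Prd X (map So Bs)) (So (Prd X Bs))
                (omega_inv X X So Sm Bs) (Tup X C (map So Bs) fs)),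
       Dif = (\<lambda>A B f. Dif X A (So B) f) \<rparr>"

definition kleisli_L_ob :: "'o \<Rightarrow> 'o" where
  "kleisli_L_ob A = A"

definition kleisli_L :: "('o, 'm, 'k) cdstr \<Rightarrow> ('o \<Rightarrow> 'o) \<Rightarrow> ('o \<Rightarrow> 'm) \<Rightarrow>
    'o \<Rightarrow> 'o \<Rightarrow> 'm \<Rightarrow> 'm" where
  "kleisli_L X So eta A B f = Cmp X A B (So B) (eta B) f"

definition kleisli_R :: "('o, 'm, 'k) cdstr \<Rightarrow> ('o \<Rightarrow> 'o) \<Rightarrow> ('o \<Rightarrow> 'o \<Rightarrow> 'm \<Rightarrow> 'm) \<Rightarrow>
    ('o \<Rightarrow> 'm) \<Rightarrow> 'o \<Rightarrow> 'o \<Rightarrow> 'm \<Rightarrow> 'm" where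
  "kleisli_R X So Sm mu A B f = Cmp X (So A) (So (So B)) (So B) (mu B) (Sm A (So B) f)"

end

theory Submission
  imports Defs
begin

text \<open>All structure maps of \<open>KL(S)\<close> occurring in the axioms (projections, zeros, linear
  combinations and pairings of these) are images under \<open>L\<^sub>S = \<eta> \<circ> -\<close> of the corresponding
  maps of \<open>\<X>\<close>, and Kleisli composition with \<open>L\<^sub>S(h)\<close> is plain precomposition with \<open>h\<close>;
  so CD.2, CD.3, CD.6 and CD.7 for \<open>KL(S)\<close> are those of \<open>\<X>\<close> at the objects \<open>S B\<close>.
  The other axioms, and the functoriality statements, rest on the fact that \<open>\<eta>\<close>, \<open>\<mu>\<close>,
  \<open>\<omega>\<close> and \<open>\<omega>\<inverse>\<close> are D-linear: D-linear maps are k-linear and satisfy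
  \<open>D[g \<circ> f] = g \<circ> D[f]\<close>, which gives \<open>D[\<mu> \<circ> S f] = \<mu> \<circ> S(D[f]) \<circ> \<omega>\<inverse>\<close>.\<close>

section \<open>Cartesian k-differential categories\<close>

locale cartesian_kdiff_category =
  fixes X :: "('o, 'm, 'k::comm_semiring_1) cdstr"
  assumes cartesian_kdiff: "is_cartesian_kdiff X"
begin

lemma cartesian_left_klinear: "is_cartesian_left_klinear X"
  using cartesian_kdiff unfolding is_cartesian_kdiff_def by simp

lemma left_klinear: "is_left_klinear X"
  using cartesian_left_klinear unfolding is_cartesian_left_klinear_def by simp

lemma category: "is_category X"
  using left_klinear unfolding is_left_klinear_def by simp

lemma finite_products: "has_finite_products X"
  using cartesian_left_klinear unfolding is_cartesian_left_klinear_def by simp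

lemma Idm_hom: "A \<in> Ob X \<Longrightarrow> Idm X A \<in> Hom X A A"
  using category unfolding is_category_def by blast

lemma Cmp_hom: "A \<in> Ob X \<Longrightarrow> B \<in> Ob X \<Longrightarrow> C \<in> Ob X \<Longrightarrow> f \<in> Hom X A B \<Longrightarrow> g \<in> Hom X B C
  \<Longrightarrow> Cmp X A B C g f \<in> Hom X A C"
  using category unfolding is_category_def by blast

lemma Cmp_Idm_right: "A \<in> Ob X \<Longrightarrow> B \<in> Ob X \<Longrightarrow> f \<in> Hom X A B \<Longrightarrow> Cmp X A A B f (Idm X A) = f"
  using category unfolding is_category_def by blast

lemma Cmp_Idm_left: "A \<in> Ob X \<Longrightarrow> B \<in> Ob X \<Longrightarrow> f \<in> Hom X A B \<Longrightarrow> Cmp X A B B (Idm X B) f = f"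
  using category unfolding is_category_def by blast

lemma Cmp_assoc: "A \<in> Ob X \<Longrightarrow> B \<in> Ob X \<Longrightarrow> C \<in> Ob X \<Longrightarrow> E \<in> Ob X \<Longrightarrow>
  f \<in> Hom X A B \<Longrightarrow> g \<in> Hom X B C \<Longrightarrow> h \<in> Hom X C E \<Longrightarrow>
  Cmp X A C E h (Cmp X A B C g f) = Cmp X A B E (Cmp X B C E h g) f"
  using category unfolding is_category_def by blast

lemma Zro_hom: "A \<in> Ob X \<Longrightarrow> B \<in> Ob X \<Longrightarrow> Zro X A B \<in> Hom X A B"
  using left_klinear unfolding is_left_klinear_def by auto

lemma Add_hom: "A \<in> Ob X \<Longrightarrow> B \<in> Ob X \<Longrightarrow> f \<in> Hom X A B \<Longrightarrow> g \<in> Hom X A B \<Longrightarrow>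
  Add X f g \<in> Hom X A B"
  using left_klinear unfolding is_left_klinear_def by auto

lemma Smul_hom: "A \<in> Ob X \<Longrightarrow> B \<in> Ob X \<Longrightarrow> f \<in> Hom X A B \<Longrightarrow> Smul X r f \<in> Hom X A B"
  using left_klinear unfolding is_left_klinear_def by auto

lemma lincomb_hom: "A \<in> Ob X \<Longrightarrow> B \<in> Ob X \<Longrightarrow> f \<in> Hom X A B \<Longrightarrow> g \<in> Hom X A B \<Longrightarrow>
  Add X (Smul X r f) (Smul X s g) \<in> Hom X A B"
  by (intro Add_hom Smul_hom)

lemma Smul_zero: "A \<in> Ob X \<Longrightarrow> B \<in> Ob X \<Longrightarrow> f \<in> Hom X A B \<Longrightarrow> Smul X 0 f = Zro X A B"
  using left_klinear unfolding is_left_klinear_def by auto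

lemma Add_Zro_Zro: "A \<in> Ob X \<Longrightarrow> B \<in> Ob X \<Longrightarrow> Add X (Zro X A B) (Zro X A B) = Zro X A B"
  using left_klinear unfolding is_left_klinear_def by auto

lemma Cmp_lincomb_left: "A \<in> Ob X \<Longrightarrow> B \<in> Ob X \<Longrightarrow> C \<in> Ob X \<Longrightarrow>
  f \<in> Hom X B C \<Longrightarrow> g \<in> Hom X B C \<Longrightarrow> x \<in> Hom X A B \<Longrightarrow>
  Cmp X A B C (Add X (Smul X r f) (Smul X s g)) x =
  Add X (Smul X r (Cmp X A B C f x)) (Smul X s (Cmp X A B C g x))"
  using left_klinear unfolding is_left_klinear_def by auto

lemma nth_Ob: "set As \<subseteq> Ob X \<Longrightarrow> j < length As \<Longrightarrow> As ! j \<in> Ob X"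
  using nth_mem by blast

lemma Prd_ob: "set As \<subseteq> Ob X \<Longrightarrow> Prd X As \<in> Ob X"
  using finite_products unfolding has_finite_products_def by blast

lemma Proj_hom: "set As \<subseteq> Ob X \<Longrightarrow> j < length As \<Longrightarrow> Proj X As j \<in> Hom X (Prd X As) (As ! j)"
  using finite_products unfolding has_finite_products_def by blast

lemma Tup_hom: "set As \<subseteq> Ob X \<Longrightarrow> C \<in> Ob X \<Longrightarrow> length fs = length As \<Longrightarrow>
  (\<And>j. j < length As \<Longrightarrow> fs ! j \<in> Hom X C (As ! j)) \<Longrightarrow> Tup X C As fs \<in> Hom X C (Prd X As)"
  using finite_products unfolding has_finite_products_def by blast

lemma Proj_Tup: "set As \<subseteq> Ob X \<Longrightarrow> C \<in> Ob X \<Longrightarrow> length fs = length As \<Longrightarrow>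
  (\<And>j. j < length As \<Longrightarrow> fs ! j \<in> Hom X C (As ! j)) \<Longrightarrow> j < length As \<Longrightarrow>
  Cmp X C (Prd X As) (As ! j) (Proj X As j) (Tup X C As fs) = fs ! j"
  using finite_products unfolding has_finite_products_def by blast

lemma Tup_Proj_Cmp: "set As \<subseteq> Ob X \<Longrightarrow> C \<in> Ob X \<Longrightarrow> g \<in> Hom X C (Prd X As) \<Longrightarrow>
  Tup X C As (map (\<lambda>j. Cmp X C (Prd X As) (As ! j) (Proj X As j) g) [0..<length As]) = g"
  using finite_products unfolding has_finite_products_def by blast

lemma Dif_hom: "A \<in> Ob X \<Longrightarrow> B \<in> Ob X \<Longrightarrow> f \<in> Hom X A B \<Longrightarrow> Dif X A B f \<in> Hom X (Prd X [A, A]) B"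
  using cartesian_kdiff unfolding is_cartesian_kdiff_def by auto

lemma Dif_lincomb: "A \<in> Ob X \<Longrightarrow> B \<in> Ob X \<Longrightarrow> f \<in> Hom X A B \<Longrightarrow> g \<in> Hom X A B \<Longrightarrow>
  Dif X A B (Add X (Smul X r f) (Smul X s g)) = Add X (Smul X r (Dif X A B f)) (Smul X s (Dif X A B g))"
  using cartesian_kdiff unfolding is_cartesian_kdiff_def by auto

lemma Dif_lincomb_second: "A \<in> Ob X \<Longrightarrow> B \<in> Ob X \<Longrightarrow> f \<in> Hom X A B \<Longrightarrow>
  Cmp X (Prd X [A, A, A]) (Prd X [A, A]) B (Dif X A B f)
    (Tup X (Prd X [A, A, A]) [A, A] [Proj X [A, A, A] 0,
       Add X (Smul X r (Proj X [A, A, A] 1)) (Smul X s (Proj X [A, A, A] 2))]) =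
  Add X (Smul X r (Cmp X (Prd X [A, A, A]) (Prd X [A, A]) B (Dif X A B f)
                     (Tup X (Prd X [A, A, A]) [A, A] [Proj X [A, A, A] 0, Proj X [A, A, A] 1])))
        (Smul X s (Cmp X (Prd X [A, A, A]) (Prd X [A, A]) B (Dif X A B f)
                     (Tup X (Prd X [A, A, A]) [A, A] [Proj X [A, A, A] 0, Proj X [A, A, A] 2])))"
  using cartesian_kdiff unfolding is_cartesian_kdiff_def Let_def by auto

lemma Dif_Idm: "A \<in> Ob X \<Longrightarrow> Dif X A A (Idm X A) = Proj X [A, A] 1"
  using cartesian_kdiff unfolding is_cartesian_kdiff_def by auto

lemma Dif_Proj: "set As \<subseteq> Ob X \<Longrightarrow> j < length As \<Longrightarrow>
  Dif X (Prd X As) (As ! j) (Proj X As j) =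
  Cmp X (Prd X [Prd X As, Prd X As]) (Prd X As) (As ! j) (Proj X As j) (Proj X [Prd X As, Prd X As] 1)"
  using cartesian_kdiff unfolding is_cartesian_kdiff_def Let_def by auto

lemma Dif_Tup: "A \<in> Ob X \<Longrightarrow> set Bs \<subseteq> Ob X \<Longrightarrow> length fs = length Bs \<Longrightarrow>
  (\<And>j. j < length Bs \<Longrightarrow> fs ! j \<in> Hom X A (Bs ! j)) \<Longrightarrow>
  Dif X A (Prd X Bs) (Tup X A Bs fs) =
  Tup X (Prd X [A, A]) Bs (map (\<lambda>j. Dif X A (Bs ! j) (fs ! j)) [0..<length Bs])"
  using cartesian_kdiff unfolding is_cartesian_kdiff_def by auto

lemma Dif_Cmp: "A \<in> Ob X \<Longrightarrow> B \<in> Ob X \<Longrightarrow> C \<in> Ob X \<Longrightarrow> f \<in> Hom X A B \<Longrightarrow> g \<in> Hom X B C \<Longrightarrow>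
  Dif X A C (Cmp X A B C g f) =
  Cmp X (Prd X [A, A]) (Prd X [B, B]) C (Dif X B C g)
    (Tup X (Prd X [A, A]) [B, B] [Cmp X (Prd X [A, A]) A B f (Proj X [A, A] 0), Dif X A B f])"
  using cartesian_kdiff unfolding is_cartesian_kdiff_def by auto

lemma Dif_Dif_zero: "A \<in> Ob X \<Longrightarrow> B \<in> Ob X \<Longrightarrow> f \<in> Hom X A B \<Longrightarrow>
  Cmp X (Prd X [A, A]) (Prd X [Prd X [A, A], Prd X [A, A]]) B (Dif X (Prd X [A, A]) B (Dif X A B f))
    (Tup X (Prd X [A, A]) [Prd X [A, A], Prd X [A, A]]
       [Tup X (Prd X [A, A]) [A, A] [Proj X [A, A] 0, Zro X (Prd X [A, A]) A],
        Tup X (Prd X [A, A]) [A, A] [Zro X (Prd X [A, A]) A, Proj X [A, A] 1]]) =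
  Dif X A B f"
  using cartesian_kdiff unfolding is_cartesian_kdiff_def Let_def by auto

lemma Dif_Dif_swap: "A \<in> Ob X \<Longrightarrow> B \<in> Ob X \<Longrightarrow> f \<in> Hom X A B \<Longrightarrow>
  Cmp X (Prd X [A, A, A, A]) (Prd X [Prd X [A, A], Prd X [A, A]]) B (Dif X (Prd X [A, A]) B (Dif X A B f))
    (Tup X (Prd X [A, A, A, A]) [Prd X [A, A], Prd X [A, A]]
       [Tup X (Prd X [A, A, A, A]) [A, A] [Proj X [A, A, A, A] 0, Proj X [A, A, A, A] 1],
        Tup X (Prd X [A, A, A, A]) [A, A] [Proj X [A, A, A, A] 2, Proj X [A, A, A, A] 3]]) =
  Cmp X (Prd X [A, A, A, A]) (Prd X [Prd X [A, A], Prd X [A, A]]) B (Dif X (Prd X [A, A]) B (Dif X A B f))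
    (Tup X (Prd X [A, A, A, A]) [Prd X [A, A], Prd X [A, A]]
       [Tup X (Prd X [A, A, A, A]) [A, A] [Proj X [A, A, A, A] 0, Proj X [A, A, A, A] 2],
        Tup X (Prd X [A, A, A, A]) [A, A] [Proj X [A, A, A, A] 1, Proj X [A, A, A, A] 3]])"
  using cartesian_kdiff unfolding is_cartesian_kdiff_def Let_def by auto

lemma Cmp_Tup:
  assumes As: "set As \<subseteq> Ob X" and C: "C \<in> Ob X" and D: "D \<in> Ob X" and l: "length fs = length As"
    and fs: "\<And>j. j < length As \<Longrightarrow> fs ! j \<in> Hom X C (As ! j)" and g: "g \<in> Hom X D C"
  shows "Cmp X D C (Prd X As) (Tup X C As fs) g =
    Tup X D As (map (\<lambda>j. Cmp X D C (As ! j) (fs ! j) g) [0..<length As])"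
proof -
  have T: "Tup X C As fs \<in> Hom X C (Prd X As)"
    by (rule Tup_hom[OF As C l fs])
  have proj: "Cmp X D (Prd X As) (As ! j) (Proj X As j) (Cmp X D C (Prd X As) (Tup X C As fs) g) =
      Cmp X D C (As ! j) (fs ! j) g" if j: "j < length As" for j
    using Cmp_assoc[OF D C Prd_ob[OF As] nth_Ob[OF As j] g T Proj_hom[OF As j]] Proj_Tup[OF As C l fs j]
    by simp
  have "Cmp X D C (Prd X As) (Tup X C As fs) g = Tup X D As (map (\<lambda>j.
      Cmp X D (Prd X As) (As ! j) (Proj X As j) (Cmp X D C (Prd X As) (Tup X C As fs) g)) [0..<length As])"
    using Tup_Proj_Cmp[OF As D Cmp_hom[OF D C Prd_ob[OF As] g T]] by simp
  also have "\<dots> = Tup X D As (map (\<lambda>j. Cmp X D C (As ! j) (fs ! j) g) [0..<length As])"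
    using proj by (intro arg_cong[where f = "Tup X D As"] map_cong) auto
  finally show ?thesis .
qed

lemma Tup_ext:
  assumes As: "set As \<subseteq> Ob X" and C: "C \<in> Ob X"
    and g: "g \<in> Hom X C (Prd X As)" and h: "h \<in> Hom X C (Prd X As)"
    and eq: "\<And>j. j < length As \<Longrightarrow>
      Cmp X C (Prd X As) (As ! j) (Proj X As j) g = Cmp X C (Prd X As) (As ! j) (Proj X As j) h"
  shows "g = h"
proof -
  have "g = Tup X C As (map (\<lambda>j. Cmp X C (Prd X As) (As ! j) (Proj X As j) g) [0..<length As])"
    using Tup_Proj_Cmp[OF As C g] by simp
  also have "\<dots> = Tup X C As (map (\<lambda>j. Cmp X C (Prd X As) (As ! j) (Proj X As j) h) [0..<length As])"
    using eq by (intro arg_cong[where f = "Tup X C As"] map_cong) auto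
  also have "\<dots> = h" using Tup_Proj_Cmp[OF As C h] .
  finally show ?thesis .
qed

lemma Tup_Proj:
  assumes As: "set As \<subseteq> Ob X"
  shows "Tup X (Prd X As) As (map (Proj X As) [0..<length As]) = Idm X (Prd X As)"
proof -
  have "Cmp X (Prd X As) (Prd X As) (As ! j) (Proj X As j) (Idm X (Prd X As)) = Proj X As j"
    if "j < length As" for j
    by (rule Cmp_Idm_right[OF Prd_ob[OF As] nth_Ob[OF As that] Proj_hom[OF As that]])
  then have "Tup X (Prd X As) As (map (Proj X As) [0..<length As]) = Tup X (Prd X As) As (map (\<lambda>j.
      Cmp X (Prd X As) (Prd X As) (As ! j) (Proj X As j) (Idm X (Prd X As))) [0..<length As])"
    by (intro arg_cong[where f = "Tup X (Prd X As) As"] map_cong) auto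
  also have "\<dots> = Idm X (Prd X As)"
    by (rule Tup_Proj_Cmp[OF As Prd_ob[OF As] Idm_hom[OF Prd_ob[OF As]]])
  finally show ?thesis .
qed

lemma Prd2_ob: "A \<in> Ob X \<Longrightarrow> B \<in> Ob X \<Longrightarrow> Prd X [A, B] \<in> Ob X"
  by (rule Prd_ob) simp

lemma Prd3_ob: "A \<in> Ob X \<Longrightarrow> B \<in> Ob X \<Longrightarrow> E \<in> Ob X \<Longrightarrow> Prd X [A, B, E] \<in> Ob X"
  by (rule Prd_ob) simp

lemma Proj2_hom:
  assumes "A \<in> Ob X" and "B \<in> Ob X"
  shows "Proj X [A, B] 0 \<in> Hom X (Prd X [A, B]) A" and "Proj X [A, B] 1 \<in> Hom X (Prd X [A, B]) B"
  using Proj_hom[of "[A, B]" 0] Proj_hom[of "[A, B]" 1] assms by simp_all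

lemma Proj3_hom:
  assumes "A \<in> Ob X" and "B \<in> Ob X" and "E \<in> Ob X"
  shows "Proj X [A, B, E] 0 \<in> Hom X (Prd X [A, B, E]) A"
    and "Proj X [A, B, E] 1 \<in> Hom X (Prd X [A, B, E]) B"
    and "Proj X [A, B, E] 2 \<in> Hom X (Prd X [A, B, E]) E"
  using Proj_hom[of "[A, B, E]" 0] Proj_hom[of "[A, B, E]" 1] Proj_hom[of "[A, B, E]" 2] assms
  by simp_all

lemma Hom_nth2: "f \<in> Hom X C A \<Longrightarrow> g \<in> Hom X C B \<Longrightarrow> j < length [A, B] \<Longrightarrow>
  [f, g] ! j \<in> Hom X C ([A, B] ! j)"
  by (auto simp: less_Suc_eq)

lemma Hom_nth3: "f \<in> Hom X C A \<Longrightarrow> g \<in> Hom X C B \<Longrightarrow> h \<in> Hom X C E \<Longrightarrow> j < length [A, B, E] \<Longrightarrow>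
  [f, g, h] ! j \<in> Hom X C ([A, B, E] ! j)"
  by (auto simp: less_Suc_eq)

lemma Tup2_hom: "A \<in> Ob X \<Longrightarrow> B \<in> Ob X \<Longrightarrow> C \<in> Ob X \<Longrightarrow> f \<in> Hom X C A \<Longrightarrow> g \<in> Hom X C B \<Longrightarrow>
  Tup X C [A, B] [f, g] \<in> Hom X C (Prd X [A, B])"
  by (rule Tup_hom) (auto intro: Hom_nth2)

lemma Tup3_hom: "A \<in> Ob X \<Longrightarrow> B \<in> Ob X \<Longrightarrow> E \<in> Ob X \<Longrightarrow> C \<in> Ob X \<Longrightarrow>
  f \<in> Hom X C A \<Longrightarrow> g \<in> Hom X C B \<Longrightarrow> h \<in> Hom X C E \<Longrightarrow>
  Tup X C [A, B, E] [f, g, h] \<in> Hom X C (Prd X [A, B, E])"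
  by (rule Tup_hom) (auto intro: Hom_nth3)

lemma Proj_Tup2:
  assumes "A \<in> Ob X" and "B \<in> Ob X" and "C \<in> Ob X" and "f \<in> Hom X C A" and "g \<in> Hom X C B"
  shows "Cmp X C (Prd X [A, B]) A (Proj X [A, B] 0) (Tup X C [A, B] [f, g]) = f"
    and "Cmp X C (Prd X [A, B]) B (Proj X [A, B] 1) (Tup X C [A, B] [f, g]) = g"
  using Proj_Tup[of "[A, B]" C "[f, g]" 0, OF _ _ _ Hom_nth2] Proj_Tup[of "[A, B]" C "[f, g]" 1, OF _ _ _ Hom_nth2]
    assms by simp_all

lemma Proj_Tup3:
  assumes "A \<in> Ob X" and "B \<in> Ob X" and "E \<in> Ob X" and "C \<in> Ob X"
    and "f \<in> Hom X C A" and "g \<in> Hom X C B" and "h \<in> Hom X C E"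
  shows "Cmp X C (Prd X [A, B, E]) A (Proj X [A, B, E] 0) (Tup X C [A, B, E] [f, g, h]) = f"
    and "Cmp X C (Prd X [A, B, E]) B (Proj X [A, B, E] 1) (Tup X C [A, B, E] [f, g, h]) = g"
    and "Cmp X C (Prd X [A, B, E]) E (Proj X [A, B, E] 2) (Tup X C [A, B, E] [f, g, h]) = h"
  using Proj_Tup[of "[A, B, E]" C "[f, g, h]" 0, OF _ _ _ Hom_nth3]
    Proj_Tup[of "[A, B, E]" C "[f, g, h]" 1, OF _ _ _ Hom_nth3]
    Proj_Tup[of "[A, B, E]" C "[f, g, h]" 2, OF _ _ _ Hom_nth3] assms
  by simp_all

lemma Cmp_Tup2: "A \<in> Ob X \<Longrightarrow> B \<in> Ob X \<Longrightarrow> C \<in> Ob X \<Longrightarrow> D \<in> Ob X \<Longrightarrow>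
  f \<in> Hom X C A \<Longrightarrow> g \<in> Hom X C B \<Longrightarrow> h \<in> Hom X D C \<Longrightarrow>
  Cmp X D C (Prd X [A, B]) (Tup X C [A, B] [f, g]) h = Tup X D [A, B] [Cmp X D C A f h, Cmp X D C B g h]"
  using Cmp_Tup[of "[A, B]" C D "[f, g]" h, OF _ _ _ _ Hom_nth2] by (simp add: upt_rec)

lemma D_linear_Dif_Tup2:
  assumes A: "A \<in> Ob X" and B: "B \<in> Ob X" and C: "C \<in> Ob X" and f: "f \<in> Hom X A B"
    and lin: "is_D_linear X A B f" and u: "u \<in> Hom X C A" and z: "z \<in> Hom X C A"
  shows "Cmp X C (Prd X [A, A]) B (Dif X A B f) (Tup X C [A, A] [u, z]) = Cmp X C A B f z"
proof -
  have "Cmp X C (Prd X [A, A]) B (Dif X A B f) (Tup X C [A, A] [u, z]) =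
      Cmp X C (Prd X [A, A]) B (Cmp X (Prd X [A, A]) A B f (Proj X [A, A] 1)) (Tup X C [A, A] [u, z])"
    using lin unfolding is_D_linear_def by simp
  also have "\<dots> = Cmp X C A B f (Cmp X C (Prd X [A, A]) A (Proj X [A, A] 1) (Tup X C [A, A] [u, z]))"
    using Cmp_assoc[OF C Prd2_ob[OF A A] A B Tup2_hom[OF A A C u z] Proj2_hom(2)[OF A A] f] by simp
  also have "\<dots> = Cmp X C A B f z"
    using Proj_Tup2(2)[OF A A C u z] by simp
  finally show ?thesis .
qed

lemma Dif_Cmp_D_linear:
  assumes A: "A \<in> Ob X" and B: "B \<in> Ob X" and C: "C \<in> Ob X"
    and f: "f \<in> Hom X A B" and g: "g \<in> Hom X B C" and lin: "is_D_linear X B C g"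
  shows "Dif X A C (Cmp X A B C g f) = Cmp X (Prd X [A, A]) B C g (Dif X A B f)"
  using Dif_Cmp[OF A B C f g]
    D_linear_Dif_Tup2[OF B C Prd2_ob[OF A A] g lin
      Cmp_hom[OF Prd2_ob[OF A A] A B Proj2_hom(1)[OF A A] f] Dif_hom[OF A B f]]
  by simp

text \<open>Evaluate CD.2 at the point \<open>\<langle>x, x, y\<rangle>\<close>: by D-linearity, \<open>D[f] \<circ> \<langle>u, v\<rangle> = f \<circ> v\<close>.\<close>

lemma D_linear_Cmp_lincomb:
  assumes A: "A \<in> Ob X" and B: "B \<in> Ob X" and C: "C \<in> Ob X" and f: "f \<in> Hom X A B"
    and lin: "is_D_linear X A B f" and x: "x \<in> Hom X C A" and y: "y \<in> Hom X C A"
  shows "Cmp X C A B f (Add X (Smul X r x) (Smul X s y)) =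
    Add X (Smul X r (Cmp X C A B f x)) (Smul X s (Cmp X C A B f y))"
proof -
  let ?P3 = "Prd X [A, A, A]" and ?P2 = "Prd X [A, A]" and ?p = "Proj X [A, A, A]"
  let ?t = "Tup X C [A, A, A] [x, x, y]"
  let ?d = "\<lambda>q. Cmp X ?P3 ?P2 B (Dif X A B f) (Tup X ?P3 [A, A] [?p 0, q])"
  have P3: "?P3 \<in> Ob X" and P2: "?P2 \<in> Ob X" using Prd3_ob Prd2_ob A by blast+
  have t: "?t \<in> Hom X C ?P3" using Tup3_hom[OF A A A C x x y] .
  note p = Proj3_hom[OF A A A] and pt = Proj_Tup3[OF A A A C x x y]
  have d: "?d q \<in> Hom X ?P3 B" if "q \<in> Hom X ?P3 A" for q
    using Cmp_hom[OF P3 P2 B Tup2_hom[OF A A P3 p(1) that] Dif_hom[OF A B f]] .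
  have eval: "Cmp X C ?P3 B (?d q) ?t = Cmp X C A B f (Cmp X C ?P3 A q ?t)"
    if q: "q \<in> Hom X ?P3 A" for q
  proof -
    have "Cmp X C ?P3 B (?d q) ?t =
        Cmp X C ?P2 B (Dif X A B f) (Cmp X C ?P3 ?P2 (Tup X ?P3 [A, A] [?p 0, q]) ?t)"
      using Cmp_assoc[OF C P3 P2 B t Tup2_hom[OF A A P3 p(1) q] Dif_hom[OF A B f]] by simp
    also have "\<dots> = Cmp X C ?P2 B (Dif X A B f) (Tup X C [A, A] [x, Cmp X C ?P3 A q ?t])"
      using Cmp_Tup2[OF A A P3 C p(1) q t] pt(1) by simp
    also have "\<dots> = Cmp X C A B f (Cmp X C ?P3 A q ?t)"
      by (rule D_linear_Dif_Tup2[OF A B C f lin x Cmp_hom[OF C P3 A t q]])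
    finally show ?thesis .
  qed
  have "Cmp X C ?P3 A (Add X (Smul X r (?p 1)) (Smul X s (?p 2))) ?t = Add X (Smul X r x) (Smul X s y)"
    using Cmp_lincomb_left[OF C P3 A p(2) p(3) t] pt by simp
  then have "Cmp X C A B f (Add X (Smul X r x) (Smul X s y)) =
      Cmp X C ?P3 B (?d (Add X (Smul X r (?p 1)) (Smul X s (?p 2)))) ?t"
    using eval[OF lincomb_hom[OF P3 A p(2) p(3)]] by simp
  also have "\<dots> = Cmp X C ?P3 B (Add X (Smul X r (?d (?p 1))) (Smul X s (?d (?p 2)))) ?t"
    using Dif_lincomb_second[OF A B f] by simp
  also have "\<dots> = Add X (Smul X r (Cmp X C A B f x)) (Smul X s (Cmp X C A B f y))"
    using Cmp_lincomb_left[OF C P3 B d[OF p(2)] d[OF p(3)] t] eval[OF p(2)] eval[OF p(3)] pt by simp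
  finally show ?thesis .
qed

end

section \<open>Strong Cartesian k-differential endofunctors\<close>

lemma is_iso_iso_inv:
  assumes "is_iso Y A B f"
  shows "iso_inv Y A B f \<in> Hom Y B A" and "Cmp Y A B A (iso_inv Y A B f) f = Idm Y A"
    and "Cmp Y B A B f (iso_inv Y A B f) = Idm Y B"
proof -
  have "iso_inv Y A B f \<in> Hom Y B A \<and>
      Cmp Y A B A (iso_inv Y A B f) f = Idm Y A \<and> Cmp Y B A B f (iso_inv Y A B f) = Idm Y B"
    using assms unfolding is_iso_def iso_inv_def by - (rule someI_ex, blast)
  then show "iso_inv Y A B f \<in> Hom Y B A" and "Cmp Y A B A (iso_inv Y A B f) f = Idm Y A"
    and "Cmp Y B A B f (iso_inv Y A B f) = Idm Y B" by simp_all
qed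

locale cartesian_kdiff_endofunctor = cartesian_kdiff_category X
  for X :: "('o, 'm, 'k::comm_semiring_1) cdstr" +
  fixes So :: "'o \<Rightarrow> 'o" and Sm :: "'o \<Rightarrow> 'o \<Rightarrow> 'm \<Rightarrow> 'm"
  assumes strong_kdiff_functor: "is_strong_cart_kdiff_functor X X So Sm"
begin

lemma strong_klinear_functor: "is_strong_cart_klinear_functor X X So Sm"
  using strong_kdiff_functor unfolding is_strong_cart_kdiff_functor_def by simp

lemma "functor": "is_functor X X So Sm"
  using strong_klinear_functor unfolding is_strong_cart_klinear_functor_def by simp

lemma So_ob: "A \<in> Ob X \<Longrightarrow> So A \<in> Ob X"
  using "functor" unfolding is_functor_def by blast

lemma So_list_ob: "set As \<subseteq> Ob X \<Longrightarrow> set (map So As) \<subseteq> Ob X"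
  using So_ob by auto

lemma Sm_hom: "A \<in> Ob X \<Longrightarrow> B \<in> Ob X \<Longrightarrow> f \<in> Hom X A B \<Longrightarrow> Sm A B f \<in> Hom X (So A) (So B)"
  using "functor" unfolding is_functor_def by blast

lemma Sm_Cmp: "A \<in> Ob X \<Longrightarrow> B \<in> Ob X \<Longrightarrow> C \<in> Ob X \<Longrightarrow> f \<in> Hom X A B \<Longrightarrow> g \<in> Hom X B C \<Longrightarrow>
  Sm A C (Cmp X A B C g f) = Cmp X (So A) (So B) (So C) (Sm B C g) (Sm A B f)"
  using "functor" unfolding is_functor_def by blast

lemma Sm_lincomb: "A \<in> Ob X \<Longrightarrow> B \<in> Ob X \<Longrightarrow> f \<in> Hom X A B \<Longrightarrow> g \<in> Hom X A B \<Longrightarrow>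
  Sm A B (Add X (Smul X r f) (Smul X s g)) = Add X (Smul X r (Sm A B f)) (Smul X s (Sm A B g))"
  using strong_klinear_functor unfolding is_strong_cart_klinear_functor_def by blast

lemma Dif_Sm: "A \<in> Ob X \<Longrightarrow> B \<in> Ob X \<Longrightarrow> f \<in> Hom X A B \<Longrightarrow>
  Dif X (So A) (So B) (Sm A B f) =
  Cmp X (Prd X [So A, So A]) (So (Prd X [A, A])) (So B)
    (Sm (Prd X [A, A]) B (Dif X A B f)) (omega_inv X X So Sm [A, A])"
  using strong_kdiff_functor unfolding is_strong_cart_kdiff_functor_def by blast

lemma omega_iso: "set As \<subseteq> Ob X \<Longrightarrow> is_iso X (So (Prd X As)) (Prd X (map So As)) (omega X X So Sm As)"
  using strong_klinear_functor unfolding is_strong_cart_klinear_functor_def by blast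

lemma omega_hom: "set As \<subseteq> Ob X \<Longrightarrow> omega X X So Sm As \<in> Hom X (So (Prd X As)) (Prd X (map So As))"
  using omega_iso unfolding is_iso_def by blast

lemma omega_inv_hom: "set As \<subseteq> Ob X \<Longrightarrow>
  omega_inv X X So Sm As \<in> Hom X (Prd X (map So As)) (So (Prd X As))"
  unfolding omega_inv_def by (rule is_iso_iso_inv(1)[OF omega_iso])

lemma omega_inv_omega: "set As \<subseteq> Ob X \<Longrightarrow>
  Cmp X (So (Prd X As)) (Prd X (map So As)) (So (Prd X As)) (omega_inv X X So Sm As) (omega X X So Sm As) =
  Idm X (So (Prd X As))"
  unfolding omega_inv_def by (rule is_iso_iso_inv(2)[OF omega_iso])

lemma omega_omega_inv: "set As \<subseteq> Ob X \<Longrightarrow>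
  Cmp X (Prd X (map So As)) (So (Prd X As)) (Prd X (map So As)) (omega X X So Sm As) (omega_inv X X So Sm As) =
  Idm X (Prd X (map So As))"
  unfolding omega_inv_def by (rule is_iso_iso_inv(3)[OF omega_iso])

lemma Sm_Proj_hom: "set As \<subseteq> Ob X \<Longrightarrow> j < length As \<Longrightarrow>
  Sm (Prd X As) (As ! j) (Proj X As j) \<in> Hom X (So (Prd X As)) (So (As ! j))"
  by (rule Sm_hom) (auto intro: Proj_hom Prd_ob)

lemma Proj_omega:
  assumes As: "set As \<subseteq> Ob X" and j: "j < length As"
  shows "Cmp X (So (Prd X As)) (Prd X (map So As)) (So (As ! j)) (Proj X (map So As) j) (omega X X So Sm As) =
    Sm (Prd X As) (As ! j) (Proj X As j)"
  using Proj_Tup[OF So_list_ob[OF As] So_ob[OF Prd_ob[OF As]],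
      of "map (\<lambda>j. Sm (Prd X As) (As ! j) (Proj X As j)) [0..<length As]" j]
    As j Sm_Proj_hom[OF As]
  unfolding omega_def by simp

lemma Sm_Proj_omega_inv:
  assumes As: "set As \<subseteq> Ob X" and j: "j < length As"
  shows "Cmp X (Prd X (map So As)) (So (Prd X As)) (So (As ! j))
      (Sm (Prd X As) (As ! j) (Proj X As j)) (omega_inv X X So Sm As) =
    Proj X (map So As) j"
proof -
  let ?Q = "Prd X (map So As)" and ?SP = "So (Prd X As)"
  have Q: "?Q \<in> Ob X" and SP: "?SP \<in> Ob X"
    using Prd_ob So_list_ob So_ob As by auto
  have SAj: "So (As ! j) \<in> Ob X" using So_ob[OF nth_Ob[OF As j]] .
  have pj: "Proj X (map So As) j \<in> Hom X ?Q (So (As ! j))"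
    using Proj_hom[OF So_list_ob[OF As], of j] j by simp
  have "Cmp X ?Q ?SP (So (As ! j)) (Sm (Prd X As) (As ! j) (Proj X As j)) (omega_inv X X So Sm As) =
      Cmp X ?Q ?SP (So (As ! j))
        (Cmp X ?SP ?Q (So (As ! j)) (Proj X (map So As) j) (omega X X So Sm As)) (omega_inv X X So Sm As)"
    using Proj_omega[OF As j] by simp
  also have "\<dots> = Cmp X ?Q ?Q (So (As ! j)) (Proj X (map So As) j)
      (Cmp X ?Q ?SP ?Q (omega X X So Sm As) (omega_inv X X So Sm As))"
    using Cmp_assoc[OF Q SP Q SAj omega_inv_hom[OF As] omega_hom[OF As] pj] by simp
  also have "\<dots> = Proj X (map So As) j"
    using omega_omega_inv[OF As] Cmp_Idm_right[OF Q SAj pj] by simp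
  finally show ?thesis .
qed

lemma Sm_Proj_D_linear:
  assumes As: "set As \<subseteq> Ob X" and j: "j < length As"
  shows "is_D_linear X (So (Prd X As)) (So (As ! j)) (Sm (Prd X As) (As ! j) (Proj X As j))"
proof -
  let ?P = "Prd X As"
  have P: "?P \<in> Ob X" and Aj: "As ! j \<in> Ob X" and PP: "Prd X [?P, ?P] \<in> Ob X"
    using Prd_ob Prd2_ob As j by auto
  have pj: "Proj X As j \<in> Hom X ?P (As ! j)" using Proj_hom[OF As j] .
  note p1 = Proj2_hom(2)[OF P P]
  have omi: "omega_inv X X So Sm [?P, ?P] \<in> Hom X (Prd X [So ?P, So ?P]) (So (Prd X [?P, ?P]))"
    using omega_inv_hom[of "[?P, ?P]"] P by simp
  have "Dif X (So ?P) (So (As ! j)) (Sm ?P (As ! j) (Proj X As j)) =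
      Cmp X (Prd X [So ?P, So ?P]) (So (Prd X [?P, ?P])) (So (As ! j))
        (Sm (Prd X [?P, ?P]) (As ! j) (Dif X ?P (As ! j) (Proj X As j))) (omega_inv X X So Sm [?P, ?P])"
    using Dif_Sm[OF P Aj pj] .
  also have "\<dots> = Cmp X (Prd X [So ?P, So ?P]) (So (Prd X [?P, ?P])) (So (As ! j))
      (Cmp X (So (Prd X [?P, ?P])) (So ?P) (So (As ! j)) (Sm ?P (As ! j) (Proj X As j))
        (Sm (Prd X [?P, ?P]) ?P (Proj X [?P, ?P] 1))) (omega_inv X X So Sm [?P, ?P])"
    using Dif_Proj[OF As j] Sm_Cmp[OF PP P Aj p1 pj] by simp
  also have "\<dots> = Cmp X (Prd X [So ?P, So ?P]) (So ?P) (So (As ! j)) (Sm ?P (As ! j) (Proj X As j))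
      (Cmp X (Prd X [So ?P, So ?P]) (So (Prd X [?P, ?P])) (So ?P)
        (Sm (Prd X [?P, ?P]) ?P (Proj X [?P, ?P] 1)) (omega_inv X X So Sm [?P, ?P]))"
    using Cmp_assoc[OF Prd2_ob[OF So_ob[OF P] So_ob[OF P]] So_ob[OF PP] So_ob[OF P] So_ob[OF Aj]
        omi Sm_hom[OF PP P p1] Sm_hom[OF P Aj pj]] by simp
  also have "\<dots> = Cmp X (Prd X [So ?P, So ?P]) (So ?P) (So (As ! j)) (Sm ?P (As ! j) (Proj X As j))
      (Proj X [So ?P, So ?P] 1)"
    using Sm_Proj_omega_inv[of "[?P, ?P]" 1] P by simp
  finally show ?thesis unfolding is_D_linear_def .
qed

lemma omega_D_linear:
  assumes As: "set As \<subseteq> Ob X"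
  shows "is_D_linear X (So (Prd X As)) (Prd X (map So As)) (omega X X So Sm As)"
proof -
  let ?SP = "So (Prd X As)"
  let ?gs = "map (\<lambda>j. Sm (Prd X As) (As ! j) (Proj X As j)) [0..<length As]"
  have SP: "?SP \<in> Ob X" using So_ob[OF Prd_ob[OF As]] .
  have gs: "\<And>j. j < length (map So As) \<Longrightarrow> ?gs ! j \<in> Hom X ?SP (map So As ! j)"
    using Sm_Proj_hom[OF As] by auto
  have lg: "length ?gs = length (map So As)" by simp
  have om: "omega X X So Sm As = Tup X ?SP (map So As) ?gs" unfolding omega_def ..
  have "Dif X ?SP (Prd X (map So As)) (omega X X So Sm As) =
      Tup X (Prd X [?SP, ?SP]) (map So As)
        (map (\<lambda>j. Dif X ?SP (map So As ! j) (?gs ! j)) [0..<length (map So As)])"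
    unfolding om by (rule Dif_Tup[OF SP So_list_ob[OF As] lg gs])
  also have "\<dots> = Tup X (Prd X [?SP, ?SP]) (map So As)
      (map (\<lambda>j. Cmp X (Prd X [?SP, ?SP]) ?SP (map So As ! j) (?gs ! j) (Proj X [?SP, ?SP] 1))
        [0..<length (map So As)])"
    using Sm_Proj_D_linear[OF As] unfolding is_D_linear_def
    by (intro arg_cong[where f = "Tup X (Prd X [?SP, ?SP]) (map So As)"] map_cong) auto
  also have "\<dots> = Cmp X (Prd X [?SP, ?SP]) ?SP (Prd X (map So As)) (omega X X So Sm As) (Proj X [?SP, ?SP] 1)"
    unfolding om by (rule Cmp_Tup[OF So_list_ob[OF As] SP Prd2_ob[OF SP SP] lg gs Proj2_hom(2)[OF SP SP], symmetric])
  finally show ?thesis unfolding is_D_linear_def .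
qed

text \<open>The inverse of a D-linear isomorphism is D-linear: apply the chain rule to
  \<open>\<omega> \<circ> \<omega>\<inverse> = 1\<close> and use CD.3.\<close>

lemma omega_inv_D_linear:
  assumes As: "set As \<subseteq> Ob X"
  shows "is_D_linear X (Prd X (map So As)) (So (Prd X As)) (omega_inv X X So Sm As)"
proof -
  let ?SP = "So (Prd X As)" and ?Q = "Prd X (map So As)"
  let ?w = "omega X X So Sm As" and ?v = "omega_inv X X So Sm As"
  have SP: "?SP \<in> Ob X" and Q: "?Q \<in> Ob X" and QQ: "Prd X [?Q, ?Q] \<in> Ob X"
    using So_ob Prd_ob Prd2_ob So_list_ob As by auto
  note w = omega_hom[OF As] and v = omega_inv_hom[OF As]
  have Dv: "Dif X ?Q ?SP ?v \<in> Hom X (Prd X [?Q, ?Q]) ?SP" using Dif_hom[OF Q SP v] .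
  have wDv: "Cmp X (Prd X [?Q, ?Q]) ?SP ?Q ?w (Dif X ?Q ?SP ?v) = Proj X [?Q, ?Q] 1"
    using Dif_Cmp_D_linear[OF Q SP Q v w omega_D_linear[OF As]] omega_omega_inv[OF As] Dif_Idm[OF Q]
    by simp
  have "Dif X ?Q ?SP ?v = Cmp X (Prd X [?Q, ?Q]) ?SP ?SP (Cmp X ?SP ?Q ?SP ?v ?w) (Dif X ?Q ?SP ?v)"
    using Cmp_Idm_left[OF QQ SP Dv] omega_inv_omega[OF As] by simp
  also have "\<dots> = Cmp X (Prd X [?Q, ?Q]) ?Q ?SP ?v (Proj X [?Q, ?Q] 1)"
    using Cmp_assoc[OF QQ SP Q SP Dv w v] wDv by simp
  finally show ?thesis unfolding is_D_linear_def .
qed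

end

section \<open>Cartesian k-differential monads and their Kleisli categories\<close>

locale cartesian_kdiff_monad = cartesian_kdiff_endofunctor X So Sm
  for X :: "('o, 'm, 'k::comm_semiring_1) cdstr" and So Sm +
  fixes mu eta :: "'o \<Rightarrow> 'm"
  assumes monad: "is_monad X So Sm mu eta"
    and eta_D_linear: "A \<in> Ob X \<Longrightarrow> is_D_linear X A (So A) (eta A)"
    and mu_D_linear: "A \<in> Ob X \<Longrightarrow> is_D_linear X (So (So A)) (So A) (mu A)"
begin

lemma eta_hom: "A \<in> Ob X \<Longrightarrow> eta A \<in> Hom X A (So A)"
  using monad unfolding is_monad_def by blast

lemma mu_hom: "A \<in> Ob X \<Longrightarrow> mu A \<in> Hom X (So (So A)) (So A)"
  using monad unfolding is_monad_def by blast

lemma eta_natural: "A \<in> Ob X \<Longrightarrow> B \<in> Ob X \<Longrightarrow> f \<in> Hom X A B \<Longrightarrow>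
  Cmp X A (So A) (So B) (Sm A B f) (eta A) = Cmp X A B (So B) (eta B) f"
  using monad unfolding is_monad_def by blast

lemma mu_natural: "A \<in> Ob X \<Longrightarrow> B \<in> Ob X \<Longrightarrow> f \<in> Hom X A B \<Longrightarrow>
  Cmp X (So (So A)) (So (So B)) (So B) (mu B) (Sm (So A) (So B) (Sm A B f)) =
  Cmp X (So (So A)) (So A) (So B) (Sm A B f) (mu A)"
  using monad unfolding is_monad_def by blast

lemma mu_eta: "A \<in> Ob X \<Longrightarrow> Cmp X (So A) (So (So A)) (So A) (mu A) (eta (So A)) = Idm X (So A)"
  using monad unfolding is_monad_def by blast

lemma mu_Sm_eta: "A \<in> Ob X \<Longrightarrow> Cmp X (So A) (So (So A)) (So A) (mu A) (Sm A (So A) (eta A)) = Idm X (So A)"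
  using monad unfolding is_monad_def by blast

lemma mu_assoc: "A \<in> Ob X \<Longrightarrow>
  Cmp X (So (So (So A))) (So (So A)) (So A) (mu A) (mu (So A)) =
  Cmp X (So (So (So A))) (So (So A)) (So A) (mu A) (Sm (So (So A)) (So A) (mu A))"
  using monad unfolding is_monad_def by blast

abbreviation bind :: "'o \<Rightarrow> 'o \<Rightarrow> 'm \<Rightarrow> 'm" where
  "bind \<equiv> kleisli_R X So Sm mu"

lemma bind_hom: "B \<in> Ob X \<Longrightarrow> C \<in> Ob X \<Longrightarrow> g \<in> Hom X B (So C) \<Longrightarrow> bind B C g \<in> Hom X (So B) (So C)"
  unfolding kleisli_R_def by (rule Cmp_hom[OF So_ob So_ob[OF So_ob] So_ob Sm_hom[OF _ So_ob] mu_hom]) auto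

lemma bind_Cmp_eta:
  assumes B: "B \<in> Ob X" and C: "C \<in> Ob X" and g: "g \<in> Hom X B (So C)"
  shows "Cmp X B (So B) (So C) (bind B C g) (eta B) = g"
proof -
  have SC: "So C \<in> Ob X" and SSC: "So (So C) \<in> Ob X" using So_ob C by auto
  have "Cmp X B (So B) (So C) (bind B C g) (eta B) =
      Cmp X B (So (So C)) (So C) (mu C) (Cmp X B (So B) (So (So C)) (Sm B (So C) g) (eta B))"
    unfolding kleisli_R_def
    using Cmp_assoc[OF B So_ob[OF B] SSC SC eta_hom[OF B] Sm_hom[OF B SC g] mu_hom[OF C]] by simp
  also have "\<dots> = Cmp X B (So (So C)) (So C) (mu C) (Cmp X B (So C) (So (So C)) (eta (So C)) g)"
    using eta_natural[OF B SC g] by simp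
  also have "\<dots> = Cmp X B (So C) (So C) (Cmp X (So C) (So (So C)) (So C) (mu C) (eta (So C))) g"
    using Cmp_assoc[OF B SC SSC SC g eta_hom[OF SC] mu_hom[OF C]] .
  also have "\<dots> = g"
    using mu_eta[OF C] Cmp_Idm_left[OF B SC g] by simp
  finally show ?thesis .
qed

lemma bind_Cmp_eta_Cmp:
  assumes A: "A \<in> Ob X" and B: "B \<in> Ob X" and C: "C \<in> Ob X"
    and g: "g \<in> Hom X B (So C)" and h: "h \<in> Hom X A B"
  shows "Cmp X A (So B) (So C) (bind B C g) (Cmp X A B (So B) (eta B) h) = Cmp X A B (So C) g h"
  using Cmp_assoc[OF A B So_ob[OF B] So_ob[OF C] h eta_hom[OF B] bind_hom[OF B C g]] bind_Cmp_eta[OF B C g]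
  by simp

lemma bind_eta: "A \<in> Ob X \<Longrightarrow> bind A A (eta A) = Idm X (So A)"
  unfolding kleisli_R_def by (rule mu_Sm_eta)

lemma bind_eta_Cmp:
  assumes A: "A \<in> Ob X" and B: "B \<in> Ob X" and h: "h \<in> Hom X A B"
  shows "bind A B (Cmp X A B (So B) (eta B) h) = Sm A B h"
proof -
  have SA: "So A \<in> Ob X" and SB: "So B \<in> Ob X" and SSB: "So (So B) \<in> Ob X" using So_ob A B by auto
  have "bind A B (Cmp X A B (So B) (eta B) h) =
      Cmp X (So A) (So (So B)) (So B) (mu B) (Cmp X (So A) (So B) (So (So B)) (Sm B (So B) (eta B)) (Sm A B h))"
    unfolding kleisli_R_def using Sm_Cmp[OF A B SB h eta_hom[OF B]] by simp
  also have "\<dots> = Cmp X (So A) (So B) (So B) (bind B B (eta B)) (Sm A B h)"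
    unfolding kleisli_R_def
    using Cmp_assoc[OF SA SB SSB SB Sm_hom[OF A B h] Sm_hom[OF B SB eta_hom[OF B]] mu_hom[OF B]] .
  also have "\<dots> = Sm A B h"
    using bind_eta[OF B] Cmp_Idm_left[OF SA SB Sm_hom[OF A B h]] by simp
  finally show ?thesis .
qed

lemma bind_Cmp_bind:
  assumes B: "B \<in> Ob X" and C: "C \<in> Ob X" and E: "E \<in> Ob X"
    and g: "g \<in> Hom X B (So C)" and h: "h \<in> Hom X C (So E)"
  shows "Cmp X (So B) (So C) (So E) (bind C E h) (bind B C g) = bind B E (Cmp X B (So C) (So E) (bind C E h) g)"
proof -
  have O: "So B \<in> Ob X" "So C \<in> Ob X" "So E \<in> Ob X" "So (So C) \<in> Ob X" "So (So E) \<in> Ob X"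
      "So (So (So E)) \<in> Ob X"
    using So_ob B C E by auto
  have Sh: "Sm C (So E) h \<in> Hom X (So C) (So (So E))" using Sm_hom[OF C O(3) h] .
  have Sg: "Sm B (So C) g \<in> Hom X (So B) (So (So C))" using Sm_hom[OF B O(2) g] .
  have SSh: "Sm (So C) (So (So E)) (Sm C (So E) h) \<in> Hom X (So (So C)) (So (So (So E)))"
    using Sm_hom[OF O(2) O(5) Sh] .
  have Smu: "Sm (So (So E)) (So E) (mu E) \<in> Hom X (So (So (So E))) (So (So E))"
    using Sm_hom[OF O(5) O(3) mu_hom[OF E]] .
  let ?SSh = "Sm (So C) (So (So E)) (Sm C (So E) h)"
  have mu_Sbind: "Cmp X (So (So C)) (So (So E)) (So E) (mu E)
        (Cmp X (So (So C)) (So (So (So E))) (So (So E)) (Sm (So (So E)) (So E) (mu E)) ?SSh) =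
      Cmp X (So (So C)) (So C) (So E) (bind C E h) (mu C)"
  proof -
    have "Cmp X (So (So C)) (So (So E)) (So E) (mu E)
          (Cmp X (So (So C)) (So (So (So E))) (So (So E)) (Sm (So (So E)) (So E) (mu E)) ?SSh) =
        Cmp X (So (So C)) (So (So (So E))) (So E)
          (Cmp X (So (So (So E))) (So (So E)) (So E) (mu E) (mu (So E))) ?SSh"
      using Cmp_assoc[OF O(4) O(6) O(5) O(3) SSh Smu mu_hom[OF E]] mu_assoc[OF E] by simp
    also have "\<dots> = Cmp X (So (So C)) (So (So E)) (So E) (mu E)
        (Cmp X (So (So C)) (So C) (So (So E)) (Sm C (So E) h) (mu C))"
      using Cmp_assoc[OF O(4) O(6) O(5) O(3) SSh mu_hom[OF O(3)] mu_hom[OF E]] mu_natural[OF C O(3) h]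
      by simp
    also have "\<dots> = Cmp X (So (So C)) (So C) (So E) (bind C E h) (mu C)"
      unfolding kleisli_R_def using Cmp_assoc[OF O(4) O(2) O(5) O(3) mu_hom[OF C] Sh mu_hom[OF E]] .
    finally show ?thesis .
  qed
  have "bind B E (Cmp X B (So C) (So E) (bind C E h) g) =
      Cmp X (So B) (So (So E)) (So E) (mu E) (Cmp X (So B) (So (So C)) (So (So E))
        (Cmp X (So (So C)) (So (So (So E))) (So (So E)) (Sm (So (So E)) (So E) (mu E)) ?SSh) (Sm B (So C) g))"
    unfolding kleisli_R_def
    using Sm_Cmp[OF B O(2) O(3) g bind_hom[OF C E h]] Sm_Cmp[OF O(2) O(5) O(3) Sh mu_hom[OF E]]
    by (simp add: kleisli_R_def)
  also have "\<dots> = Cmp X (So B) (So (So C)) (So E) (Cmp X (So (So C)) (So C) (So E) (bind C E h) (mu C))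
      (Sm B (So C) g)"
    using Cmp_assoc[OF O(1) O(4) O(5) O(3) Sg Cmp_hom[OF O(4) O(6) O(5) SSh Smu] mu_hom[OF E]] mu_Sbind
    by simp
  also have "\<dots> = Cmp X (So B) (So C) (So E) (bind C E h) (bind B C g)"
    unfolding kleisli_R_def[of _ _ _ _ B]
    using Cmp_assoc[OF O(1) O(4) O(2) O(3) Sg mu_hom[OF C] bind_hom[OF C E h]] by simp
  finally show ?thesis by simp
qed

lemma bind_lincomb:
  assumes B: "B \<in> Ob X" and C: "C \<in> Ob X" and f: "f \<in> Hom X B (So C)" and g: "g \<in> Hom X B (So C)"
  shows "bind B C (Add X (Smul X r f) (Smul X s g)) = Add X (Smul X r (bind B C f)) (Smul X s (bind B C g))"
  unfolding kleisli_R_def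
  using Sm_lincomb[OF B So_ob[OF C] f g]
    D_linear_Cmp_lincomb[OF So_ob[OF So_ob[OF C]] So_ob[OF C] So_ob[OF B] mu_hom[OF C] mu_D_linear[OF C]
      Sm_hom[OF B So_ob[OF C] f] Sm_hom[OF B So_ob[OF C] g]]
  by simp

lemma eta_Cmp_lincomb: "A \<in> Ob X \<Longrightarrow> C \<in> Ob X \<Longrightarrow> x \<in> Hom X C A \<Longrightarrow> y \<in> Hom X C A \<Longrightarrow>
  Cmp X C A (So A) (eta A) (Add X (Smul X r x) (Smul X s y)) =
  Add X (Smul X r (Cmp X C A (So A) (eta A) x)) (Smul X s (Cmp X C A (So A) (eta A) y))"
  by (rule D_linear_Cmp_lincomb[OF _ So_ob _ eta_hom eta_D_linear])

lemma eta_Cmp_Zro: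
  assumes A: "A \<in> Ob X" and C: "C \<in> Ob X"
  shows "Cmp X C A (So A) (eta A) (Zro X C A) = Zro X C (So A)"
proof -
  note Z = Zro_hom[OF C A]
  have eZ: "Cmp X C A (So A) (eta A) (Zro X C A) \<in> Hom X C (So A)"
    using Cmp_hom[OF C A So_ob[OF A] Z eta_hom[OF A]] .
  show ?thesis
    using eta_Cmp_lincomb[OF A C Z Z, of 0 0] Smul_zero[OF C A Z] Smul_zero[OF C So_ob[OF A] eZ]
      Add_Zro_Zro[OF C A] Add_Zro_Zro[OF C So_ob[OF A]]
    by simp
qed

lemma Dif_bind:
  assumes A: "A \<in> Ob X" and B: "B \<in> Ob X" and f: "f \<in> Hom X A (So B)"
  shows "Dif X (So A) (So B) (bind A B f) =
    Cmp X (Prd X [So A, So A]) (So (Prd X [A, A])) (So B) (bind (Prd X [A, A]) B (Dif X A (So B) f))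
      (omega_inv X X So Sm [A, A])"
proof -
  have SA: "So A \<in> Ob X" and SB: "So B \<in> Ob X" and SSB: "So (So B) \<in> Ob X" and PA: "Prd X [A, A] \<in> Ob X"
    using So_ob Prd2_ob A B by auto
  have omi: "omega_inv X X So Sm [A, A] \<in> Hom X (Prd X [So A, So A]) (So (Prd X [A, A]))"
    using omega_inv_hom[of "[A, A]"] A by simp
  have "Dif X (So A) (So B) (bind A B f) =
      Cmp X (Prd X [So A, So A]) (So (So B)) (So B) (mu B) (Dif X (So A) (So (So B)) (Sm A (So B) f))"
    unfolding kleisli_R_def
    by (rule Dif_Cmp_D_linear[OF SA SSB SB Sm_hom[OF A SB f] mu_hom[OF B] mu_D_linear[OF B]])
  also have "\<dots> = Cmp X (Prd X [So A, So A]) (So (So B)) (So B) (mu B)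
      (Cmp X (Prd X [So A, So A]) (So (Prd X [A, A])) (So (So B))
        (Sm (Prd X [A, A]) (So B) (Dif X A (So B) f)) (omega_inv X X So Sm [A, A]))"
    using Dif_Sm[OF A SB f] by simp
  also have "\<dots> = Cmp X (Prd X [So A, So A]) (So (Prd X [A, A])) (So B) (bind (Prd X [A, A]) B (Dif X A (So B) f))
      (omega_inv X X So Sm [A, A])"
    unfolding kleisli_R_def
    by (rule Cmp_assoc[OF Prd2_ob[OF SA SA] So_ob[OF PA] SSB SB omi Sm_hom[OF PA SB Dif_hom[OF A SB f]] mu_hom[OF B]])
  finally show ?thesis .
qed

text \<open>\<open>\<omega> \<circ> \<eta> = \<eta> \<times> \<dots> \<times> \<eta>\<close> by naturality of \<open>\<eta>\<close>, so pairing \<open>\<eta>\<close>-images and then applying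
  \<open>\<omega>\<inverse>\<close> is the same as applying \<open>\<eta>\<close> to the pairing.\<close>

lemma omega_inv_Tup_eta:
  assumes Bs: "set Bs \<subseteq> Ob X" and C: "C \<in> Ob X" and l: "length fs = length Bs"
    and fs: "\<And>j. j < length Bs \<Longrightarrow> fs ! j \<in> Hom X C (Bs ! j)"
  shows "Cmp X C (Prd X (map So Bs)) (So (Prd X Bs)) (omega_inv X X So Sm Bs)
      (Tup X C (map So Bs) (map (\<lambda>j. Cmp X C (Bs ! j) (So (Bs ! j)) (eta (Bs ! j)) (fs ! j)) [0..<length Bs]))
    = Cmp X C (Prd X Bs) (So (Prd X Bs)) (eta (Prd X Bs)) (Tup X C Bs fs)"
proof -
  let ?P = "Prd X Bs" and ?Q = "Prd X (map So Bs)"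
  let ?gs = "map (\<lambda>j. Cmp X C (Bs ! j) (So (Bs ! j)) (eta (Bs ! j)) (fs ! j)) [0..<length Bs]"
  let ?w = "omega X X So Sm Bs" and ?v = "omega_inv X X So Sm Bs"
  let ?eT = "Cmp X C ?P (So ?P) (eta ?P) (Tup X C Bs fs)"
  have P: "?P \<in> Ob X" and Q: "?Q \<in> Ob X" and SP: "So ?P \<in> Ob X"
    using Prd_ob So_list_ob So_ob Bs by auto
  note Bj = nth_Ob[OF Bs]
  have T: "Tup X C Bs fs \<in> Hom X C ?P" using Tup_hom[OF Bs C l fs] .
  have eT: "?eT \<in> Hom X C (So ?P)" using Cmp_hom[OF C P SP T eta_hom[OF P]] .
  note w = omega_hom[OF Bs] and v = omega_inv_hom[OF Bs]
  have gs: "\<And>j. j < length (map So Bs) \<Longrightarrow> ?gs ! j \<in> Hom X C (map So Bs ! j)"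
    using fs Bj C by (auto intro!: Cmp_hom eta_hom So_ob)
  have TG: "Tup X C (map So Bs) ?gs \<in> Hom X C ?Q"
    using Tup_hom[OF So_list_ob[OF Bs] C _ gs] by simp
  have key: "Tup X C (map So Bs) ?gs = Cmp X C (So ?P) ?Q ?w ?eT"
  proof (rule Tup_ext[OF So_list_ob[OF Bs] C TG Cmp_hom[OF C SP Q eT w]])
    fix j assume j': "j < length (map So Bs)"
    then have j: "j < length Bs" by simp
    have pj: "Proj X Bs j \<in> Hom X ?P (Bs ! j)" using Proj_hom[OF Bs j] .
    have pj': "Proj X (map So Bs) j \<in> Hom X ?Q (So (Bs ! j))"
      using Proj_hom[OF So_list_ob[OF Bs] j'] j by simp
    have "Cmp X C ?Q (So (Bs ! j)) (Proj X (map So Bs) j) (Cmp X C (So ?P) ?Q ?w ?eT) =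
        Cmp X C (So ?P) (So (Bs ! j)) (Sm ?P (Bs ! j) (Proj X Bs j)) ?eT"
      using Cmp_assoc[OF C SP Q So_ob[OF Bj[OF j]] eT w pj'] Proj_omega[OF Bs j] by simp
    also have "\<dots> = Cmp X C ?P (So (Bs ! j)) (Cmp X ?P (Bs ! j) (So (Bs ! j)) (eta (Bs ! j)) (Proj X Bs j))
        (Tup X C Bs fs)"
      using Cmp_assoc[OF C P SP So_ob[OF Bj[OF j]] T eta_hom[OF P] Sm_hom[OF P Bj[OF j] pj]]
        eta_natural[OF P Bj[OF j] pj] by simp
    also have "\<dots> = ?gs ! j"
      using Cmp_assoc[OF C P Bj[OF j] So_ob[OF Bj[OF j]] T pj eta_hom[OF Bj[OF j]]] Proj_Tup[OF Bs C l fs j] j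
      by simp
    also have "\<dots> = Cmp X C ?Q (So (Bs ! j)) (Proj X (map So Bs) j) (Tup X C (map So Bs) ?gs)"
      using Proj_Tup[OF So_list_ob[OF Bs] C _ gs j'] j by simp
    finally show "Cmp X C ?Q (map So Bs ! j) (Proj X (map So Bs) j) (Tup X C (map So Bs) ?gs) =
        Cmp X C ?Q (map So Bs ! j) (Proj X (map So Bs) j) (Cmp X C (So ?P) ?Q ?w ?eT)"
      using j by simp
  qed
  have "Cmp X C ?Q (So ?P) ?v (Tup X C (map So Bs) ?gs) =
      Cmp X C (So ?P) (So ?P) (Cmp X (So ?P) ?Q (So ?P) ?v ?w) ?eT"
    using key Cmp_assoc[OF C SP Q SP eT w v] by simp
  also have "\<dots> = ?eT"
    using omega_inv_omega[OF Bs] Cmp_Idm_left[OF C SP eT] by simp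
  finally show ?thesis .
qed



abbreviation K :: "('o, 'm, 'k) cdstr" where
  "K \<equiv> kleisli X So Sm mu eta"

abbreviation L :: "'o \<Rightarrow> 'o \<Rightarrow> 'm \<Rightarrow> 'm" where
  "L \<equiv> kleisli_L X So eta"

lemma kleisli_simps:
  "Ob K = Ob X" "Hom K A B = Hom X A (So B)" "Idm K A = eta A"
  "Cmp K A B C g f = Cmp X A (So B) (So C) (bind B C g) f"
  "Smul K = Smul X" "Add K = Add X" "Zro K A B = Zro X A (So B)" "Prd K = Prd X"
  "Proj K As j = L (Prd X As) (As ! j) (Proj X As j)"
  "Tup K C Bs fs = Cmp X C (Prd X (map So Bs)) (So (Prd X Bs)) (omega_inv X X So Sm Bs) (Tup X C (map So Bs) fs)"
  "Dif K A B f = Dif X A (So B) f"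
  by (simp_all add: kleisli_def kleisli_R_def kleisli_L_def)

lemma L_hom: "A \<in> Ob X \<Longrightarrow> B \<in> Ob X \<Longrightarrow> f \<in> Hom X A B \<Longrightarrow> L A B f \<in> Hom K A B"
  unfolding kleisli_L_def kleisli_simps by (rule Cmp_hom[OF _ _ So_ob _ eta_hom])

lemma kleisli_Cmp_L:
  "A \<in> Ob X \<Longrightarrow> B \<in> Ob X \<Longrightarrow> C \<in> Ob X \<Longrightarrow> g \<in> Hom K B C \<Longrightarrow> h \<in> Hom X A B \<Longrightarrow>
  Cmp K A B C g (L A B h) = Cmp X A B (So C) g h"
  unfolding kleisli_L_def kleisli_simps by (rule bind_Cmp_eta_Cmp)

lemma L_lincomb: "A \<in> Ob X \<Longrightarrow> B \<in> Ob X \<Longrightarrow> f \<in> Hom X A B \<Longrightarrow> g \<in> Hom X A B \<Longrightarrow>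
  L A B (Add X (Smul X r f) (Smul X s g)) = Add K (Smul K r (L A B f)) (Smul K s (L A B g))"
  unfolding kleisli_L_def kleisli_simps by (rule eta_Cmp_lincomb)

lemma L_Zro: "A \<in> Ob X \<Longrightarrow> B \<in> Ob X \<Longrightarrow> L A B (Zro X A B) = Zro K A B"
  unfolding kleisli_L_def kleisli_simps by (rule eta_Cmp_Zro)

lemma kleisli_Tup_L:
  assumes "set Bs \<subseteq> Ob X" and "C \<in> Ob X" and "length fs = length Bs"
    and "\<And>j. j < length Bs \<Longrightarrow> fs ! j \<in> Hom X C (Bs ! j)"
  shows "Tup K C Bs (map (\<lambda>j. L C (Bs ! j) (fs ! j)) [0..<length Bs]) = L C (Prd X Bs) (Tup X C Bs fs)"
  unfolding kleisli_L_def kleisli_simps by (rule omega_inv_Tup_eta[OF assms])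

lemma kleisli_Tup2_L: "A \<in> Ob X \<Longrightarrow> B \<in> Ob X \<Longrightarrow> C \<in> Ob X \<Longrightarrow> f \<in> Hom X C A \<Longrightarrow> g \<in> Hom X C B \<Longrightarrow>
  Tup K C [A, B] [L C A f, L C B g] = L C (Prd X [A, B]) (Tup X C [A, B] [f, g])"
  using kleisli_Tup_L[of "[A, B]" C "[f, g]", OF _ _ _ Hom_nth2] by (simp add: upt_rec)

lemma kleisli_Cmp_Tup2_L:
  assumes A: "A \<in> Ob X" and B: "B \<in> Ob X" and E: "E \<in> Ob X" and P: "P \<in> Ob X"
    and h: "h \<in> Hom K (Prd X [A, B]) E" and u: "u \<in> Hom X P A" and v: "v \<in> Hom X P B"
  shows "Cmp K P (Prd X [A, B]) E h (Tup K P [A, B] [L P A u, L P B v]) =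
    Cmp X P (Prd X [A, B]) (So E) h (Tup X P [A, B] [u, v])"
  using kleisli_Tup2_L[OF A B P u v] kleisli_Cmp_L[OF P Prd2_ob[OF A B] E h Tup2_hom[OF A B P u v]]
  by simp

lemma kleisli_category: "is_category K"
  unfolding is_category_def kleisli_simps
proof (intro conjI)
  show "\<forall>A\<in>Ob X. eta A \<in> Hom X A (So A)" using eta_hom by blast
  show "\<forall>A\<in>Ob X. \<forall>B\<in>Ob X. \<forall>C\<in>Ob X. \<forall>f g. f \<in> Hom X A (So B) \<longrightarrow> g \<in> Hom X B (So C) \<longrightarrow>
      Cmp X A (So B) (So C) (bind B C g) f \<in> Hom X A (So C)"
    using Cmp_hom So_ob bind_hom by blast
  show "\<forall>A\<in>Ob X. \<forall>B\<in>Ob X. \<forall>f. f \<in> Hom X A (So B) \<longrightarrow>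
      Cmp X A (So A) (So B) (bind A B f) (eta A) = f \<and> Cmp X A (So B) (So B) (bind B B (eta B)) f = f"
    using bind_Cmp_eta bind_eta Cmp_Idm_left So_ob by simp
  show "\<forall>A\<in>Ob X. \<forall>B\<in>Ob X. \<forall>C\<in>Ob X. \<forall>E\<in>Ob X. \<forall>f g h.
      f \<in> Hom X A (So B) \<longrightarrow> g \<in> Hom X B (So C) \<longrightarrow> h \<in> Hom X C (So E) \<longrightarrow>
      Cmp X A (So C) (So E) (bind C E h) (Cmp X A (So B) (So C) (bind B C g) f) =
      Cmp X A (So B) (So E) (bind B E (Cmp X B (So C) (So E) (bind C E h) g)) f"
    using Cmp_assoc[OF _ So_ob So_ob So_ob _ bind_hom bind_hom] bind_Cmp_bind by simp
qed

lemma ball_Ob_So: "\<forall>A\<in>Ob X. \<forall>B\<in>Ob X. P A B \<Longrightarrow> \<forall>A\<in>Ob X. \<forall>B\<in>Ob X. P A (So B)"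
  using So_ob by blast

lemma kleisli_left_klinear: "is_left_klinear K"
  unfolding is_left_klinear_def
proof (intro conjI kleisli_category)
  have "\<forall>A\<in>Ob X. \<forall>B\<in>Ob X. \<forall>C\<in>Ob X. \<forall>f g x r s.
      f \<in> Hom X B (So C) \<longrightarrow> g \<in> Hom X B (So C) \<longrightarrow> x \<in> Hom X A (So B) \<longrightarrow>
      Cmp X A (So B) (So C) (bind B C (Add X (Smul X r f) (Smul X s g))) x =
      Add X (Smul X r (Cmp X A (So B) (So C) (bind B C f) x)) (Smul X s (Cmp X A (So B) (So C) (bind B C g) x))"
    using bind_lincomb Cmp_lincomb_left[OF _ So_ob So_ob bind_hom bind_hom] by simp
  then show "\<forall>A\<in>Ob K. \<forall>B\<in>Ob K. \<forall>C\<in>Ob K. \<forall>f g x r s.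
      f \<in> Hom K B C \<longrightarrow> g \<in> Hom K B C \<longrightarrow> x \<in> Hom K A B \<longrightarrow>
      Cmp K A B C (Add K (Smul K r f) (Smul K s g)) x =
      Add K (Smul K r (Cmp K A B C f x)) (Smul K s (Cmp K A B C g x))"
    unfolding kleisli_simps .
qed (use ball_Ob_So[OF conjunct1[OF conjunct2[OF left_klinear[unfolded is_left_klinear_def]]]] in
     \<open>unfold kleisli_simps\<close>)

lemma kleisli_Proj_Cmp:
  assumes As: "set As \<subseteq> Ob X" and j: "j < length As" and C: "C \<in> Ob X"
  shows "Cmp K C (Prd X As) (As ! j) (Proj K As j) x = Cmp X C (So (Prd X As)) (So (As ! j)) (Sm (Prd X As) (As ! j) (Proj X As j)) x"
  unfolding kleisli_simps kleisli_L_def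
  using bind_eta_Cmp[OF Prd_ob[OF As] nth_Ob[OF As j] Proj_hom[OF As j]] by simp


lemma kleisli_Tup_hom:
  assumes As: "set As \<subseteq> Ob K" and C: "C \<in> Ob K" and l: "length fs = length As"
    and fs: "\<And>j. j < length As \<Longrightarrow> fs ! j \<in> Hom K C (As ! j)"
  shows "Tup K C As fs \<in> Hom K C (Prd K As)"
proof -
  have As': "set As \<subseteq> Ob X" and C': "C \<in> Ob X" using As C unfolding kleisli_simps .
  have "Tup X C (map So As) fs \<in> Hom X C (Prd X (map So As))"
    using Tup_hom[OF So_list_ob[OF As'] C'] l fs unfolding kleisli_simps by simp
  then show ?thesis
    unfolding kleisli_simps
    using Cmp_hom[OF C' Prd_ob[OF So_list_ob[OF As']] So_ob[OF Prd_ob[OF As']] _ omega_inv_hom[OF As']] by simp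
qed

lemma kleisli_Proj_Tup:
  assumes As: "set As \<subseteq> Ob K" and C: "C \<in> Ob K" and l: "length fs = length As"
    and fs: "\<And>j. j < length As \<Longrightarrow> fs ! j \<in> Hom K C (As ! j)" and j: "j < length As"
  shows "Cmp K C (Prd K As) (As ! j) (Proj K As j) (Tup K C As fs) = fs ! j"
proof -
  have As': "set As \<subseteq> Ob X" and C': "C \<in> Ob X" using As C unfolding kleisli_simps .
  let ?P = "Prd X As" and ?Q = "Prd X (map So As)"
  have T: "Tup X C (map So As) fs \<in> Hom X C ?Q"
    using Tup_hom[OF So_list_ob[OF As'] C'] l fs unfolding kleisli_simps by simp
  have "Cmp K C ?P (As ! j) (Proj K As j) (Tup K C As fs) =
      Cmp X C (So ?P) (So (As ! j)) (Sm ?P (As ! j) (Proj X As j))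
        (Cmp X C ?Q (So ?P) (omega_inv X X So Sm As) (Tup X C (map So As) fs))"
    using kleisli_Proj_Cmp[OF As' j C'] unfolding kleisli_simps(10) .
  also have "\<dots> = Cmp X C ?Q (So (As ! j))
      (Cmp X ?Q (So ?P) (So (As ! j)) (Sm ?P (As ! j) (Proj X As j)) (omega_inv X X So Sm As)) (Tup X C (map So As) fs)"
    using Cmp_assoc[OF C' Prd_ob[OF So_list_ob[OF As']] So_ob[OF Prd_ob[OF As']] So_ob[OF nth_Ob[OF As' j]]
        T omega_inv_hom[OF As'] Sm_Proj_hom[OF As' j]] .
  also have "\<dots> = fs ! j"
    using Sm_Proj_omega_inv[OF As' j] Proj_Tup[OF So_list_ob[OF As'] C', of fs j] l fs j
    unfolding kleisli_simps by simp
  finally show ?thesis unfolding kleisli_simps .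
qed

lemma kleisli_Tup_Proj_Cmp:
  assumes As: "set As \<subseteq> Ob K" and C: "C \<in> Ob K" and g: "g \<in> Hom K C (Prd K As)"
  shows "Tup K C As (map (\<lambda>j. Cmp K C (Prd K As) (As ! j) (Proj K As j) g) [0..<length As]) = g"
proof -
  have As': "set As \<subseteq> Ob X" and C': "C \<in> Ob X" and g': "g \<in> Hom X C (So (Prd X As))"
    using As C g unfolding kleisli_simps .
  let ?gs = "map (\<lambda>j. Sm (Prd X As) (As ! j) (Proj X As j)) [0..<length As]"
  have gs: "\<And>j. j < length (map So As) \<Longrightarrow> ?gs ! j \<in> Hom X (So (Prd X As)) (map So As ! j)"
    using Sm_Proj_hom[OF As'] by auto
  have "map (\<lambda>j. Cmp K C (Prd K As) (As ! j) (Proj K As j) g) [0..<length As] =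
      map (\<lambda>j. Cmp X C (So (Prd X As)) (map So As ! j) (?gs ! j) g) [0..<length (map So As)]"
    using kleisli_Proj_Cmp[OF As' _ C'] unfolding kleisli_simps(8) by (intro map_cong) auto
  also have "Tup X C (map So As) \<dots> = Cmp X C (So (Prd X As)) (Prd X (map So As)) (omega X X So Sm As) g"
    unfolding omega_def by (rule Cmp_Tup[OF So_list_ob[OF As'] So_ob[OF Prd_ob[OF As']] C' _ gs g', symmetric]) simp
  finally show ?thesis
    unfolding kleisli_simps(10)
    using Cmp_assoc[OF C' So_ob[OF Prd_ob[OF As']] Prd_ob[OF So_list_ob[OF As']] So_ob[OF Prd_ob[OF As']]
        g' omega_hom[OF As'] omega_inv_hom[OF As']]
      omega_inv_omega[OF As'] Cmp_Idm_left[OF C' So_ob[OF Prd_ob[OF As']] g']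
    by simp
qed

lemma kleisli_finite_products: "has_finite_products K"
  unfolding has_finite_products_def
proof (intro allI impI conjI ballI)
  fix As assume As: "set As \<subseteq> Ob K"
  then have As': "set As \<subseteq> Ob X" unfolding kleisli_simps .
  show "Prd K As \<in> Ob K" using Prd_ob[OF As'] unfolding kleisli_simps .
  show "Proj K As j \<in> Hom K (Prd K As) (As ! j)" if "j < length As" for j
    using L_hom[OF Prd_ob[OF As'] nth_Ob[OF As' that] Proj_hom[OF As' that]] unfolding kleisli_simps .
qed (auto intro: kleisli_Tup_hom kleisli_Proj_Tup kleisli_Tup_Proj_Cmp)

lemma kleisli_Proj_klinear:
  assumes As: "set As \<subseteq> Ob K" and j: "j < length As"
  shows "is_klinear_map K (Prd K As) (As ! j) (Proj K As j)"
  unfolding is_klinear_map_def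
proof (intro ballI allI impI)
  fix C x y r s assume C: "C \<in> Ob K" and x: "x \<in> Hom K C (Prd K As)" and y: "y \<in> Hom K C (Prd K As)"
  have As': "set As \<subseteq> Ob X" and C': "C \<in> Ob X" using As C unfolding kleisli_simps .
  have x': "x \<in> Hom X C (So (Prd X As))" and y': "y \<in> Hom X C (So (Prd X As))"
    using x y unfolding kleisli_simps .
  show "Cmp K C (Prd K As) (As ! j) (Proj K As j) (Add K (Smul K r x) (Smul K s y)) =
      Add K (Smul K r (Cmp K C (Prd K As) (As ! j) (Proj K As j) x))
        (Smul K s (Cmp K C (Prd K As) (As ! j) (Proj K As j) y))"
    using kleisli_Proj_Cmp[OF As' j C'] D_linear_Cmp_lincomb[OF So_ob[OF Prd_ob[OF As']]
        So_ob[OF nth_Ob[OF As' j]] C' Sm_Proj_hom[OF As' j] Sm_Proj_D_linear[OF As' j] x' y']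
    unfolding kleisli_simps(5,6,8) by simp
qed

lemma kleisli_cartesian_left_klinear: "is_cartesian_left_klinear K"
  unfolding is_cartesian_left_klinear_def
  using kleisli_left_klinear kleisli_finite_products kleisli_Proj_klinear by blast


subsection \<open>The Kleisli differential combinator\<close>

lemma kleisli_Dif_hom: "A \<in> Ob K \<Longrightarrow> B \<in> Ob K \<Longrightarrow> f \<in> Hom K A B \<Longrightarrow> Dif K A B f \<in> Hom K (Prd K [A, A]) B"
  unfolding kleisli_simps by (rule Dif_hom[OF _ So_ob])

lemma kleisli_Dif_lincomb: "A \<in> Ob K \<Longrightarrow> B \<in> Ob K \<Longrightarrow> f \<in> Hom K A B \<Longrightarrow> g \<in> Hom K A B \<Longrightarrow>
  Dif K A B (Add K (Smul K r f) (Smul K s g)) = Add K (Smul K r (Dif K A B f)) (Smul K s (Dif K A B g))"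
  unfolding kleisli_simps by (rule Dif_lincomb[OF _ So_ob])

lemma kleisli_Dif_lincomb_second:
  assumes A: "A \<in> Ob K" and B: "B \<in> Ob K" and f: "f \<in> Hom K A B"
  shows "Cmp K (Prd K [A, A, A]) (Prd K [A, A]) B (Dif K A B f)
      (Tup K (Prd K [A, A, A]) [A, A] [Proj K [A, A, A] 0,
         Add K (Smul K r (Proj K [A, A, A] 1)) (Smul K s (Proj K [A, A, A] 2))]) =
    Add K (Smul K r (Cmp K (Prd K [A, A, A]) (Prd K [A, A]) B (Dif K A B f)
                       (Tup K (Prd K [A, A, A]) [A, A] [Proj K [A, A, A] 0, Proj K [A, A, A] 1])))
          (Smul K s (Cmp K (Prd K [A, A, A]) (Prd K [A, A]) B (Dif K A B f)
                       (Tup K (Prd K [A, A, A]) [A, A] [Proj K [A, A, A] 0, Proj K [A, A, A] 2])))"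
proof -
  have A': "A \<in> Ob X" and B': "B \<in> Ob X" and f': "f \<in> Hom X A (So B)" using A B f unfolding kleisli_simps .
  let ?P3 = "Prd X [A, A, A]" and ?P2 = "Prd X [A, A]" and ?p = "Proj X [A, A, A]"
  have P3: "?P3 \<in> Ob X" using Prd3_ob[OF A' A' A'] .
  note p = Proj3_hom[OF A' A' A']
  have Df: "Dif K A B f \<in> Hom K ?P2 B" using kleisli_Dif_hom[OF A B f] unfolding kleisli_simps .
  have projK: "Proj K [A, A, A] 0 = L ?P3 A (?p 0)" "Proj K [A, A, A] 1 = L ?P3 A (?p 1)"
      "Proj K [A, A, A] 2 = L ?P3 A (?p 2)"
    unfolding kleisli_simps by simp_all
  have reduce: "Cmp K ?P3 ?P2 B (Dif K A B f) (Tup K ?P3 [A, A] [L ?P3 A (?p 0), L ?P3 A q]) =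
      Cmp X ?P3 ?P2 (So B) (Dif X A (So B) f) (Tup X ?P3 [A, A] [?p 0, q])" if "q \<in> Hom X ?P3 A" for q
    using kleisli_Cmp_Tup2_L[OF A' A' B' P3 Df p(1) that] unfolding kleisli_simps(11) .
  show ?thesis
    unfolding projK L_lincomb[OF P3 A' p(2) p(3), symmetric] kleisli_simps(8)
    using reduce[OF lincomb_hom[OF P3 A' p(2) p(3)]] reduce[OF p(2)] reduce[OF p(3)]
      Dif_lincomb_second[OF A' So_ob[OF B'] f']
    unfolding kleisli_simps(5,6) by simp_all
qed

lemma kleisli_Dif_Idm: "A \<in> Ob K \<Longrightarrow> Dif K A A (Idm K A) = Proj K [A, A] 1"
  using eta_D_linear unfolding is_D_linear_def kleisli_simps kleisli_L_def by simp

lemma kleisli_Dif_Proj: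
  assumes As: "set As \<subseteq> Ob K" and j: "j < length As"
  shows "Dif K (Prd K As) (As ! j) (Proj K As j) =
    Cmp K (Prd K [Prd K As, Prd K As]) (Prd K As) (As ! j) (Proj K As j) (Proj K [Prd K As, Prd K As] 1)"
proof -
  have As': "set As \<subseteq> Ob X" using As unfolding kleisli_simps .
  let ?P = "Prd X As" and ?Aj = "As ! j"
  have P: "?P \<in> Ob X" and Aj: "?Aj \<in> Ob X" using Prd_ob nth_Ob As' j by auto
  note pj = Proj_hom[OF As' j] and p1 = Proj2_hom(2)[OF P P]
  have "Dif X ?P (So ?Aj) (L ?P ?Aj (Proj X As j)) =
      Cmp X (Prd X [?P, ?P]) ?Aj (So ?Aj) (eta ?Aj) (Dif X ?P ?Aj (Proj X As j))"
    unfolding kleisli_L_def by (rule Dif_Cmp_D_linear[OF P Aj So_ob[OF Aj] pj eta_hom[OF Aj] eta_D_linear[OF Aj]])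
  also have "\<dots> = Cmp X (Prd X [?P, ?P]) ?P (So ?Aj) (L ?P ?Aj (Proj X As j)) (Proj X [?P, ?P] 1)"
    unfolding Dif_Proj[OF As' j] kleisli_L_def
    by (rule Cmp_assoc[OF Prd2_ob[OF P P] P Aj So_ob[OF Aj] p1 pj eta_hom[OF Aj]])
  also have "\<dots> = Cmp K (Prd X [?P, ?P]) ?P ?Aj (L ?P ?Aj (Proj X As j)) (L (Prd X [?P, ?P]) ?P (Proj X [?P, ?P] 1))"
    by (rule kleisli_Cmp_L[symmetric, OF Prd2_ob[OF P P] P Aj L_hom[OF P Aj pj] p1])
  finally show ?thesis unfolding kleisli_simps(8,9,11) by simp
qed

lemma kleisli_Dif_Tup:
  assumes A: "A \<in> Ob K" and Bs: "set Bs \<subseteq> Ob K" and l: "length fs = length Bs"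
    and fs: "\<forall>j < length Bs. fs ! j \<in> Hom K A (Bs ! j)"
  shows "Dif K A (Prd K Bs) (Tup K A Bs fs) =
    Tup K (Prd K [A, A]) Bs (map (\<lambda>j. Dif K A (Bs ! j) (fs ! j)) [0..<length Bs])"
proof -
  have A': "A \<in> Ob X" and Bs': "set Bs \<subseteq> Ob X" using A Bs unfolding kleisli_simps .
  have fs': "\<And>j. j < length (map So Bs) \<Longrightarrow> fs ! j \<in> Hom X A (map So Bs ! j)"
    using fs unfolding kleisli_simps by simp
  have l': "length fs = length (map So Bs)" using l by simp
  have "Dif X A (So (Prd X Bs)) (Cmp X A (Prd X (map So Bs)) (So (Prd X Bs)) (omega_inv X X So Sm Bs)
        (Tup X A (map So Bs) fs)) =
      Cmp X (Prd X [A, A]) (Prd X (map So Bs)) (So (Prd X Bs)) (omega_inv X X So Sm Bs)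
        (Dif X A (Prd X (map So Bs)) (Tup X A (map So Bs) fs))"
    by (rule Dif_Cmp_D_linear[OF A' Prd_ob[OF So_list_ob[OF Bs']] So_ob[OF Prd_ob[OF Bs']]
          Tup_hom[OF So_list_ob[OF Bs'] A' l' fs'] omega_inv_hom[OF Bs'] omega_inv_D_linear[OF Bs']])
  also have "Dif X A (Prd X (map So Bs)) (Tup X A (map So Bs) fs) = Tup X (Prd X [A, A]) (map So Bs)
      (map (\<lambda>j. Dif X A (map So Bs ! j) (fs ! j)) [0..<length (map So Bs)])"
    by (rule Dif_Tup[OF A' So_list_ob[OF Bs'] l' fs'])
  also have "map (\<lambda>j. Dif X A (map So Bs ! j) (fs ! j)) [0..<length (map So Bs)] =
      map (\<lambda>j. Dif X A (So (Bs ! j)) (fs ! j)) [0..<length Bs]"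
    by (rule map_cong) auto
  finally show ?thesis unfolding kleisli_simps by simp
qed

lemma kleisli_Dif_Cmp:
  assumes A: "A \<in> Ob K" and B: "B \<in> Ob K" and C: "C \<in> Ob K" and f: "f \<in> Hom K A B" and g: "g \<in> Hom K B C"
  shows "Dif K A C (Cmp K A B C g f) =
    Cmp K (Prd K [A, A]) (Prd K [B, B]) C (Dif K B C g)
      (Tup K (Prd K [A, A]) [B, B] [Cmp K (Prd K [A, A]) A B f (Proj K [A, A] 0), Dif K A B f])"
proof -
  have A': "A \<in> Ob X" and B': "B \<in> Ob X" and C': "C \<in> Ob X"
    and f': "f \<in> Hom X A (So B)" and g': "g \<in> Hom X B (So C)" using A B C f g unfolding kleisli_simps .
  let ?PA = "Prd X [A, A]" and ?PB = "Prd X [B, B]" and ?Q = "Prd X [So B, So B]"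
  let ?T = "Tup X ?PA [So B, So B] [Cmp X ?PA A (So B) f (Proj X [A, A] 0), Dif X A (So B) f]"
  have PA: "?PA \<in> Ob X" and PB: "?PB \<in> Ob X" and SB: "So B \<in> Ob X" and SC: "So C \<in> Ob X"
    using Prd2_ob So_ob A' B' C' by auto
  have T: "?T \<in> Hom X ?PA ?Q"
    using Tup2_hom[OF SB SB PA Cmp_hom[OF PA A' SB Proj2_hom(1)[OF A' A'] f'] Dif_hom[OF A' SB f']] .
  have omi: "omega_inv X X So Sm [B, B] \<in> Hom X ?Q (So ?PB)" using omega_inv_hom[of "[B, B]"] B' by simp
  have "Dif K A C (Cmp K A B C g f) = Cmp X ?PA ?Q (So C) (Dif X (So B) (So C) (bind B C g)) ?T"
    unfolding kleisli_simps(4,11) by (rule Dif_Cmp[OF A' SB SC f' bind_hom[OF B' C' g']])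
  also have "\<dots> = Cmp X ?PA (So ?PB) (So C) (bind ?PB C (Dif X B (So C) g))
      (Cmp X ?PA ?Q (So ?PB) (omega_inv X X So Sm [B, B]) ?T)"
    unfolding Dif_bind[OF B' C' g']
    by (rule Cmp_assoc[symmetric, OF PA Prd2_ob[OF SB SB] So_ob[OF PB] SC T omi bind_hom[OF PB C' Dif_hom[OF B' SC g']]])
  also have "\<dots> = Cmp K (Prd K [A, A]) (Prd K [B, B]) C (Dif K B C g)
      (Tup K (Prd K [A, A]) [B, B] [Cmp K (Prd K [A, A]) A B f (Proj K [A, A] 0), Dif K A B f])"
    using kleisli_Cmp_L[OF PA A' B' f Proj2_hom(1)[OF A' A']] unfolding kleisli_simps(4,8,9,10,11) by simp
  finally show ?thesis .
qed

lemma kleisli_Dif_Dif_zero: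
  assumes A: "A \<in> Ob K" and B: "B \<in> Ob K" and f: "f \<in> Hom K A B"
  shows "Cmp K (Prd K [A, A]) (Prd K [Prd K [A, A], Prd K [A, A]]) B (Dif K (Prd K [A, A]) B (Dif K A B f))
      (Tup K (Prd K [A, A]) [Prd K [A, A], Prd K [A, A]]
         [Tup K (Prd K [A, A]) [A, A] [Proj K [A, A] 0, Zro K (Prd K [A, A]) A],
          Tup K (Prd K [A, A]) [A, A] [Zro K (Prd K [A, A]) A, Proj K [A, A] 1]]) =
    Dif K A B f"
proof -
  have A': "A \<in> Ob X" and B': "B \<in> Ob X" and f': "f \<in> Hom X A (So B)" using A B f unfolding kleisli_simps .
  let ?P2 = "Prd X [A, A]"
  have P2: "?P2 \<in> Ob X" using Prd2_ob[OF A' A'] .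
  note p = Proj2_hom[OF A' A'] and Z = Zro_hom[OF P2 A']
  have projK: "Proj K [A, A] 0 = L ?P2 A (Proj X [A, A] 0)" "Proj K [A, A] 1 = L ?P2 A (Proj X [A, A] 1)"
    unfolding kleisli_simps by simp_all
  have DDf: "Dif K ?P2 B (Dif K A B f) \<in> Hom K (Prd X [?P2, ?P2]) B"
    using kleisli_Dif_hom[OF _ B kleisli_Dif_hom[OF A B f]] P2 unfolding kleisli_simps by simp
  show ?thesis
    unfolding kleisli_simps(8) projK L_Zro[OF P2 A', symmetric]
    using kleisli_Tup2_L[OF A' A' P2 p(1) Z] kleisli_Tup2_L[OF A' A' P2 Z p(2)]
      kleisli_Cmp_Tup2_L[OF P2 P2 B' P2 DDf Tup2_hom[OF A' A' P2 p(1) Z] Tup2_hom[OF A' A' P2 Z p(2)]]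
      Dif_Dif_zero[OF A' So_ob[OF B'] f']
    unfolding kleisli_simps(11) by simp
qed

lemma kleisli_Dif_Dif_swap:
  assumes A: "A \<in> Ob K" and B: "B \<in> Ob K" and f: "f \<in> Hom K A B"
  shows "Cmp K (Prd K [A, A, A, A]) (Prd K [Prd K [A, A], Prd K [A, A]]) B (Dif K (Prd K [A, A]) B (Dif K A B f))
      (Tup K (Prd K [A, A, A, A]) [Prd K [A, A], Prd K [A, A]]
         [Tup K (Prd K [A, A, A, A]) [A, A] [Proj K [A, A, A, A] 0, Proj K [A, A, A, A] 1],
          Tup K (Prd K [A, A, A, A]) [A, A] [Proj K [A, A, A, A] 2, Proj K [A, A, A, A] 3]]) =
    Cmp K (Prd K [A, A, A, A]) (Prd K [Prd K [A, A], Prd K [A, A]]) B (Dif K (Prd K [A, A]) B (Dif K A B f))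
      (Tup K (Prd K [A, A, A, A]) [Prd K [A, A], Prd K [A, A]]
         [Tup K (Prd K [A, A, A, A]) [A, A] [Proj K [A, A, A, A] 0, Proj K [A, A, A, A] 2],
          Tup K (Prd K [A, A, A, A]) [A, A] [Proj K [A, A, A, A] 1, Proj K [A, A, A, A] 3]])"
proof -
  have A': "A \<in> Ob X" and B': "B \<in> Ob X" and f': "f \<in> Hom X A (So B)" using A B f unfolding kleisli_simps .
  let ?P2 = "Prd X [A, A]" and ?P4 = "Prd X [A, A, A, A]" and ?q = "Proj X [A, A, A, A]"
  have P2: "?P2 \<in> Ob X" and P4: "?P4 \<in> Ob X" using Prd2_ob Prd_ob A' by auto
  have q: "?q 0 \<in> Hom X ?P4 A" "?q 1 \<in> Hom X ?P4 A" "?q 2 \<in> Hom X ?P4 A" "?q 3 \<in> Hom X ?P4 A"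
    using Proj_hom[of "[A, A, A, A]" 0] Proj_hom[of "[A, A, A, A]" 1] Proj_hom[of "[A, A, A, A]" 2]
      Proj_hom[of "[A, A, A, A]" 3] A'
    by simp_all
  have projK: "Proj K [A, A, A, A] 0 = L ?P4 A (?q 0)" "Proj K [A, A, A, A] 1 = L ?P4 A (?q 1)"
      "Proj K [A, A, A, A] 2 = L ?P4 A (?q 2)" "Proj K [A, A, A, A] 3 = L ?P4 A (?q 3)"
    unfolding kleisli_simps by simp_all
  have DDf: "Dif K ?P2 B (Dif K A B f) \<in> Hom K (Prd X [?P2, ?P2]) B"
    using kleisli_Dif_hom[OF _ B kleisli_Dif_hom[OF A B f]] P2 unfolding kleisli_simps by simp
  have reduce: "Cmp K ?P4 (Prd X [?P2, ?P2]) B (Dif K ?P2 B (Dif K A B f))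
        (Tup K ?P4 [?P2, ?P2] [Tup K ?P4 [A, A] [L ?P4 A a, L ?P4 A b], Tup K ?P4 [A, A] [L ?P4 A c, L ?P4 A d]]) =
      Cmp X ?P4 (Prd X [?P2, ?P2]) (So B) (Dif X ?P2 (So B) (Dif X A (So B) f))
        (Tup X ?P4 [?P2, ?P2] [Tup X ?P4 [A, A] [a, b], Tup X ?P4 [A, A] [c, d]])"
    if "a \<in> Hom X ?P4 A" "b \<in> Hom X ?P4 A" "c \<in> Hom X ?P4 A" "d \<in> Hom X ?P4 A" for a b c d
    using kleisli_Tup2_L[OF A' A' P4 that(1,2)] kleisli_Tup2_L[OF A' A' P4 that(3,4)]
      kleisli_Cmp_Tup2_L[OF P2 P2 B' P4 DDf Tup2_hom[OF A' A' P4 that(1,2)] Tup2_hom[OF A' A' P4 that(3,4)]]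
    unfolding kleisli_simps(11) by simp
  show ?thesis
    unfolding kleisli_simps(8) projK
    using reduce[OF q(1) q(2) q(3) q(4)] reduce[OF q(1) q(3) q(2) q(4)] Dif_Dif_swap[OF A' So_ob[OF B'] f']
    by simp
qed

theorem kleisli_cartesian_kdiff: "is_cartesian_kdiff K"
  unfolding is_cartesian_kdiff_def Let_def
  by (intro conjI ballI allI impI kleisli_cartesian_left_klinear kleisli_Dif_hom kleisli_Dif_lincomb
      kleisli_Dif_lincomb_second kleisli_Dif_Idm kleisli_Dif_Proj kleisli_Dif_Tup kleisli_Dif_Cmp
      kleisli_Dif_Dif_zero kleisli_Dif_Dif_swap)
    auto


lemma kleisli_D_linear_iff:
  assumes A: "A \<in> Ob X" and B: "B \<in> Ob X" and f: "f \<in> Hom K A B"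
  shows "is_D_linear K A B f \<longleftrightarrow> is_D_linear X A (So B) f"
  using kleisli_Cmp_L[OF Prd2_ob[OF A A] A B f Proj2_hom(2)[OF A A]]
  unfolding is_D_linear_def kleisli_simps(8,9,11) by simp

subsection \<open>The functors \<open>L\<^sub>S\<close> and \<open>R\<^sub>S\<close>\<close>

lemma kleisli_L_ob_id: "kleisli_L_ob = id"
  by (rule ext) (simp add: kleisli_L_ob_def)

lemma omega_kleisli_L:
  assumes As: "set As \<subseteq> Ob X"
  shows "omega X K kleisli_L_ob L As = Idm K (Prd X As)"
proof -
  let ?P = "Prd X As"
  have P: "?P \<in> Ob X" using Prd_ob[OF As] .
  have "omega X K kleisli_L_ob L As = Tup K ?P As (map (\<lambda>j. L ?P (As ! j) (Proj X As j)) [0..<length As])"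
    unfolding omega_def kleisli_L_ob_id by simp
  also have "\<dots> = Tup K ?P As (map (\<lambda>j. L ?P (As ! j) (map (Proj X As) [0..<length As] ! j)) [0..<length As])"
    by (intro arg_cong[where f = "Tup K ?P As"] map_cong) auto
  also have "\<dots> = L ?P ?P (Tup X ?P As (map (Proj X As) [0..<length As]))"
    by (rule kleisli_Tup_L[OF As P]) (use Proj_hom[OF As] in auto)
  also have "\<dots> = Idm K ?P"
    unfolding Tup_Proj[OF As] kleisli_L_def kleisli_simps by (rule Cmp_Idm_right[OF P So_ob[OF P] eta_hom[OF P]])
  finally show ?thesis .
qed

lemma kleisli_L_functor: "is_functor X K kleisli_L_ob L"
  unfolding is_functor_def kleisli_L_ob_id id_apply
proof (intro conjI ballI allI impI)
  fix A assume A: "A \<in> Ob X"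
  show "A \<in> Ob K" using A unfolding kleisli_simps .
  show "L A A (Idm X A) = Idm K A"
    unfolding kleisli_L_def kleisli_simps by (rule Cmp_Idm_right[OF A So_ob[OF A] eta_hom[OF A]])
next
  fix A B f assume "A \<in> Ob X" "B \<in> Ob X" "f \<in> Hom X A B"
  then show "L A B f \<in> Hom K A B" by (rule L_hom)
next
  fix A B C f g assume A: "A \<in> Ob X" and B: "B \<in> Ob X" and C: "C \<in> Ob X"
    and f: "f \<in> Hom X A B" and g: "g \<in> Hom X B C"
  show "L A C (Cmp X A B C g f) = Cmp K A B C (L B C g) (L A B f)"
    unfolding kleisli_Cmp_L[OF A B C L_hom[OF B C g] f]
    unfolding kleisli_L_def by (rule Cmp_assoc[OF A B C So_ob[OF C] f g eta_hom[OF C]])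
qed

theorem kleisli_L_strict_kdiff_functor: "is_strict_cart_kdiff_functor X K kleisli_L_ob L"
  unfolding is_strict_cart_kdiff_functor_def is_strict_cart_klinear_functor_def
    is_strong_cart_klinear_functor_def
proof (intro conjI allI impI ballI kleisli_L_functor)
  fix As assume As: "set As \<subseteq> Ob X"
  have P: "Prd X As \<in> Ob X" using Prd_ob[OF As] .
  show "is_iso K (kleisli_L_ob (Prd X As)) (Prd K (map kleisli_L_ob As)) (omega X K kleisli_L_ob L As)"
    unfolding omega_kleisli_L[OF As] unfolding is_iso_def kleisli_L_ob_id kleisli_simps
    using eta_hom[OF P] bind_Cmp_eta[OF P P eta_hom[OF P]] by auto
  show "kleisli_L_ob (Prd X As) = Prd K (map kleisli_L_ob As)"
    unfolding kleisli_L_ob_id kleisli_simps by simp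
  show "omega X K kleisli_L_ob L As = Idm K (kleisli_L_ob (Prd X As))"
    unfolding omega_kleisli_L[OF As] by (simp add: kleisli_L_ob_def)
next
  fix A B f g r s assume "A \<in> Ob X" "B \<in> Ob X" "f \<in> Hom X A B" "g \<in> Hom X A B"
  then show "L A B (Add X (Smul X r f) (Smul X s g)) = Add K (Smul K r (L A B f)) (Smul K s (L A B g))"
    by (rule L_lincomb)
next
  fix A B f assume A: "A \<in> Ob X" and B: "B \<in> Ob X" and f: "f \<in> Hom X A B"
  show "Dif K (kleisli_L_ob A) (kleisli_L_ob B) (L A B f) = L (Prd X [A, A]) B (Dif X A B f)"
    unfolding kleisli_L_ob_id id_apply kleisli_simps kleisli_L_def
    by (rule Dif_Cmp_D_linear[OF A B So_ob[OF B] f eta_hom[OF B] eta_D_linear[OF B]])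
qed

lemma omega_kleisli_R: "set As \<subseteq> Ob X \<Longrightarrow> omega K X So bind As = omega X X So Sm As"
  unfolding omega_def kleisli_simps kleisli_L_def
  by (intro arg_cong[where f = "Tup X (So (Prd X As)) (map So As)"] map_cong refl)
    (auto intro!: bind_eta_Cmp Proj_hom Prd_ob nth_Ob)

theorem kleisli_R_strong_kdiff_functor: "is_strong_cart_kdiff_functor K X So bind"
  unfolding is_strong_cart_kdiff_functor_def is_strong_cart_klinear_functor_def
proof (intro conjI allI impI ballI)
  show "is_functor K X So bind"
    unfolding is_functor_def kleisli_simps
    using So_ob bind_eta bind_hom bind_Cmp_bind by simp
next
  fix As assume "set As \<subseteq> Ob K"
  then have As: "set As \<subseteq> Ob X" unfolding kleisli_simps .
  show "is_iso X (So (Prd K As)) (Prd X (map So As)) (omega K X So bind As)"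
    unfolding omega_kleisli_R[OF As] kleisli_simps by (rule omega_iso[OF As])
next
  fix A B f g r s assume "A \<in> Ob K" "B \<in> Ob K" "f \<in> Hom K A B" "g \<in> Hom K A B"
  then show "bind A B (Add K (Smul K r f) (Smul K s g)) = Add X (Smul X r (bind A B f)) (Smul X s (bind A B g))"
    unfolding kleisli_simps by (rule bind_lincomb)
next
  fix A B f assume A: "A \<in> Ob K" and B: "B \<in> Ob K" and f: "f \<in> Hom K A B"
  have A': "A \<in> Ob X" using A unfolding kleisli_simps .
  have "omega_inv K X So bind [A, A] = omega_inv X X So Sm [A, A]"
    unfolding omega_inv_def omega_kleisli_R[of "[A, A]", simplified, OF A'] kleisli_simps ..
  then show "Dif X (So A) (So B) (bind A B f) =
      Cmp X (Prd X [So A, So A]) (So (Prd K [A, A])) (So B) (bind (Prd K [A, A]) B (Dif K A B f))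
        (omega_inv K X So bind [A, A])"
    using Dif_bind A B f unfolding kleisli_simps by simp
qed

end

theorem mainTheorem3:
  fixes X :: "('o, 'm, 'k::comm_semiring_1) cdstr"
    and So :: "'o \<Rightarrow> 'o" and Sm :: "'o \<Rightarrow> 'o \<Rightarrow> 'm \<Rightarrow> 'm"
    and mu eta :: "'o \<Rightarrow> 'm"
  assumes "is_cartesian_kdiff X"
    and "is_cart_kdiff_monad X So Sm mu eta"
  shows "is_cartesian_kdiff (kleisli X So Sm mu eta)
    \<and> (\<forall>A\<in>Ob X. \<forall>B\<in>Ob X. \<forall>f. f \<in> Hom (kleisli X So Sm mu eta) A B \<longrightarrow>
         (is_D_linear (kleisli X So Sm mu eta) A B f \<longleftrightarrow> is_D_linear X A (So B) f))
    \<and> is_strict_cart_kdiff_functor X (kleisli X So Sm mu eta) kleisli_L_ob (kleisli_L X So eta)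
    \<and> is_strong_cart_kdiff_functor (kleisli X So Sm mu eta) X So (kleisli_R X So Sm mu)"
proof -
  interpret cartesian_kdiff_monad X So Sm mu eta
    using assms unfolding is_cart_kdiff_monad_def by unfold_locales auto
  show ?thesis
    using kleisli_cartesian_kdiff kleisli_D_linear_iff kleisli_L_strict_kdiff_functor
      kleisli_R_strong_kdiff_functor
    by blast
qed

end
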